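(* Let $\mathcal{U}$ be a finite alphabet, $p_{UX}$ a distribution on $\mathcal{U}\times\mathcal{X}$, and consider the random code ensemble described in the context, where for each $n$ the randomization index $K$ has an arbitrary (possibly non-uniform) distribution $p_{K}^{(n)}$ on $\{1,\dots,2^{nR_r}\}$. If $$\liminf_{n\to\infty}\tfrac1n R_2(K)>I(X;Z|U),$$ then there exists $\beta>0$ such that for all sufficiently large $n$, $$\mathbb{E}_{\mathcal{C}_n}\Big[\mathbb{V}\big(p_{MZ^n},\,p_M\,p_{Z^n}\big)\Big]\le 2^{-\beta n},$$ where the expectation is over the random codebook $\mathcal{C}_n$ and $p_{MZ^n}$ is the joint distribution of $(M,Z^n)$ induced by a given codebook.
   Context: All logarithms are base 2. $W_{YZ|X}$ is a discrete memoryless wiretap channel with finite alphabets, used memorylessly; the joint distribution of $(U,X,Y,Z)$ is $p_{UX}(u,x)W_{YZ|X}(y,z|x)$. Random code ensemble: fix rates $R_0,R,R_r>0$ and $n$. Generate $U^n(i)$, $i\in\{1,\dots,2^{nR_0}\}$, independently, each i.i.d. with law $p_U$; for each $i$, generate $X^n(i,j,k)$, $j\in\{1,\dots,2^{nR}\}$, $k\in\{1,\dots,2^{nR_r}\}$, conditionally independently with law $\prod_{t=1}^n p_{X|U}(\cdot|U_t(i))$. The indices $M_0$ and $M$ are independent and uniform on $\{1,\dots,2^{nR_0}\}$ and $\{1,\dots,2^{nR}\}$, and independent of a randomization index $K\in\{1,\dots,2^{nR_r}\}$; the transmitted word is $X^n(M_0,M,K)$ and $Z^n$ is the eavesdropper's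 output of $W^n$. The variational distance is $\mathbb{V}(p,q)=\sum_a|p(a)-q(a)|$. The Rényi entropy of order two of $K$ is $R_2(K)=-\log\sum_k p_K(k)^2$. *)

theory Defs
  imports "HOL-Probability.Probability"
begin

definition idx_size :: "real \<Rightarrow> nat \<Rightarrow> nat" where
  "idx_size r n = nat \<lceil>2 powr (real n * r)\<rceil>"

definition marg_U :: "('u \<times> 'x) pmf \<Rightarrow> 'u pmf" where
  "marg_U pUX = map_pmf fst pUX"

definition cond_X_U :: "('u \<times> 'x) pmf \<Rightarrow> 'u \<Rightarrow> 'x pmf" where
  "cond_X_U pUX u = map_pmf snd (cond_pmf pUX {p. fst p = u})"

text \<open>Eavesdropper marginal W_{Z|X} of the wiretap channel W_{YZ|X}.\<close>
definition chanZ :: "('x \<Rightarrow> ('y \<times> 'z) pmf) \<Rightarrow> 'x \<Rightarrow> 'z pmf" where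
  "chanZ W x = map_pmf snd (W x)"

definition cond_mutual_info ::
  "('u::finite \<times> 'x::finite) pmf \<Rightarrow> ('x \<Rightarrow> ('y \<times> 'z::finite) pmf) \<Rightarrow> real" where
  "cond_mutual_info pUX W =
     (let pUXZ = (\<lambda>u x z. pmf pUX (u, x) * pmf (chanZ W x) z);
          pU = (\<lambda>u. \<Sum>x\<in>UNIV. pmf pUX (u, x));
          pUZ = (\<lambda>u z. \<Sum>x\<in>UNIV. pUXZ u x z)
      in \<Sum>u\<in>UNIV. \<Sum>x\<in>UNIV. \<Sum>z\<in>UNIV.
           (if pUXZ u x z = 0 then 0
            else pUXZ u x z * log 2 (pUXZ u x z * pU u / (pmf pUX (u, x) * pUZ u z))))"

definition renyi2 :: "'a pmf \<Rightarrow> real" where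
  "renyi2 p = - log 2 (\<Sum>k\<in>set_pmf p. (pmf p k)^2)"

definition var_dist :: "'a pmf \<Rightarrow> 'a pmf \<Rightarrow> real" where
  "var_dist p q = (\<Sum>\<^sub>\<infinity> a. \<bar>pmf p a - pmf q a\<bar>)"

text \<open>A codebook: U-codewords uc(i,t) and X-codewords xc(i,j,k,t)
  (indices from 0, time t < n).\<close>
type_synonym ('u, 'x) codebook = "(nat \<times> nat \<Rightarrow> 'u) \<times> (nat \<times> nat \<times> nat \<times> nat \<Rightarrow> 'x)"

definition codebook_pmf ::
  "('u \<times> 'x) pmf \<Rightarrow> real \<Rightarrow> real \<Rightarrow> real \<Rightarrow> nat \<Rightarrow> ('u, 'x) codebook pmf" where
  "codebook_pmf pUX R0 R Rr n =
     do { uc \<leftarrow> Pi_pmf ({..<idx_size R0 n} \<times> {..<n}) undefined (\<lambda>_. marg_U pUX);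
          xc \<leftarrow> Pi_pmf ({..<idx_size R0 n} \<times> {..<idx_size R n} \<times> {..<idx_size Rr n} \<times> {..<n})
                  undefined (\<lambda>(i, j, k, t). cond_X_U pUX (uc (i, t)));
          return_pmf (uc, xc) }"

definition joint_MZ ::
  "('x \<Rightarrow> ('y \<times> 'z) pmf) \<Rightarrow> real \<Rightarrow> real \<Rightarrow> nat \<Rightarrow> nat pmf \<Rightarrow> ('u, 'x) codebook
     \<Rightarrow> (nat \<times> (nat \<Rightarrow> 'z)) pmf" where
  "joint_MZ W R0 R n pK cb =
     do { m0 \<leftarrow> pmf_of_set {..<idx_size R0 n};
          m \<leftarrow> pmf_of_set {..<idx_size R n};
          k \<leftarrow> pK;
          z \<leftarrow> Pi_pmf {..<n} undefined (\<lambda>t. chanZ W (snd cb (m0, m, k, t)));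
          return_pmf (m, z) }"

definition product_of_marginals :: "('a \<times> 'b) pmf \<Rightarrow> ('a \<times> 'b) pmf" where
  "product_of_marginals p = pair_pmf (map_pmf fst p) (map_pmf snd p)"

end

theory Submission
  imports Defs
begin

text \<open>
  The argument is the soft-covering (channel resolvability) estimate with a second-moment
  bound, in which the Renyi entropy of order two of the randomisation index \<open>K\<close> replaces the
  usual randomisation rate.
  \<^item> For a fixed codebook, \<open>(M, Z\<^sup>n)\<close> is a labelled mixture; its distance to \<open>p\<^sub>M p\<^sub>Z\<close> is
    at most twice the mean deviation of the output laws \<open>Z\<^sup>n | M = m\<close> from any reference law.
    Taking as reference the ideal outputs \<open>V\<^sup>n(\<cdot>|U\<^sup>n(m0))\<close> reduces the leakage to the
    deviation of each sub-codebook \<open>{X\<^sup>n(m0, m, k)}\<^sub>k\<close>, weighted by \<open>p\<^sub>K\<close>, from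
    \<open>V\<^sup>n(\<cdot>|U\<^sup>n(m0))\<close>.
  \<^item> Averaged over the random codebook, every sub-codebook is an i.i.d. family superposed on
    an i.i.d. \<open>U\<close>-word, so all these deviations have the same expectation.
  \<^item> Truncating \<open>W\<^sup>n\<close> at \<open>2 powr T * V\<^sup>n\<close>, Cauchy--Schwarz bounds the typical part by
    \<open>sqrt (2 powr T * \<Sum>\<^sub>k p\<^sub>K(k)\<^sup>2) = sqrt (2 powr (T - R\<^sub>2(K)))\<close>, and a Chernoff bound
    controls the atypical part by \<open>2 powr (-s T) * \<Phi>(s)\<^sup>n\<close>, where \<open>\<Phi>\<close> is the moment
    generating function of the information density.
  \<^item> Near \<open>s = 0\<close>, \<open>\<Phi>(s) \<le> 2 powr (s (I(X;Z|U) + \<delta>))\<close>; with \<open>T = n(I + \<delta>)\<close> and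
    \<open>R\<^sub>2(K) \<ge> n(I + 2\<delta>)\<close> both terms decay exponentially.
\<close>

lemma expectation_bind_finite:
  fixes h :: "'b \<Rightarrow> real"
  assumes "finite (set_pmf p)" "\<And>x. x \<in> set_pmf p \<Longrightarrow> finite (set_pmf (f x))"
  shows "measure_pmf.expectation (p \<bind> f) h =
           measure_pmf.expectation p (\<lambda>a. measure_pmf.expectation (f a) h)"
proof -
  have "measure_pmf.expectation (p \<bind> f) h =
          (\<Sum>a\<in>set_pmf p. pmf p a *\<^sub>R measure_pmf.expectation (f a) h)"
    using assms by (intro pmf_expectation_bind) auto
  also have "\<dots> = measure_pmf.expectation p (\<lambda>a. measure_pmf.expectation (f a) h)"
    using assms by (subst integral_measure_pmf[of "set_pmf p"]) auto
  finally show ?thesis .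
qed

lemma pmf_map_inj_on_superset:
  assumes "inj_on g S" "set_pmf M \<subseteq> S" "x \<in> S"
  shows "pmf (map_pmf g M) (g x) = pmf M x"
proof (cases "x \<in> set_pmf M")
  case True
  then show ?thesis using assms by (intro pmf_map_inj) (auto intro: inj_on_subset)
next
  case False
  have "g x \<notin> g ` set_pmf M" using assms False by (auto dest: inj_onD)
  then show ?thesis using False by (simp add: pmf_map_outside set_pmf_eq)
qed

lemma finite_set_Pi_pmf:
  assumes "finite A" "\<And>x. x \<in> A \<Longrightarrow> finite (set_pmf (p x))"
  shows "finite (set_pmf (Pi_pmf A d p))"
  using assms by (intro finite_subset[OF set_Pi_pmf_subset'[OF assms(1)]] finite_PiE_dflt) auto

lemma Pi_pmf_reindex_image:
  assumes B: "finite B" and inj: "inj_on h B"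
  shows "map_pmf (\<lambda>f b. if b \<in> B then f (h b) else d) (Pi_pmf (h ` B) d p) =
           Pi_pmf B d (\<lambda>b. p (h b))"
proof (rule pmf_eqI)
  let ?g = "\<lambda>f b. if b \<in> B then f (h b) else d"
  let ?M = "Pi_pmf (h ` B) d p"
  let ?S = "{f. \<forall>c. c \<notin> h ` B \<longrightarrow> f c = d}"
  have setM: "set_pmf ?M \<subseteq> ?S" using B by (intro set_Pi_pmf_subset) simp
  have injg: "inj_on ?g ?S"
  proof (rule inj_onI, rule ext)
    fix f1 f2 c assume f: "f1 \<in> ?S" "f2 \<in> ?S" "?g f1 = ?g f2"
    show "f1 c = f2 c"
    proof (cases "c \<in> h ` B")
      case True
      then obtain b where b: "b \<in> B" "c = h b" by auto
      from f(3) have "?g f1 b = ?g f2 b" by (rule fun_cong)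
      with b show ?thesis by simp
    qed (use f in auto)
  qed
  fix y
  show "pmf (map_pmf ?g ?M) y = pmf (Pi_pmf B d (\<lambda>b. p (h b))) y"
  proof (cases "\<forall>b. b \<notin> B \<longrightarrow> y b = d")
    case True
    define x where "x = (\<lambda>c. if c \<in> h ` B then y (inv_into B h c) else d)"
    have xS: "x \<in> ?S" by (simp add: x_def)
    have "?g x = y" using True inj by (auto simp: x_def fun_eq_iff)
    hence "pmf (map_pmf ?g ?M) y = pmf ?M x"
      using pmf_map_inj_on_superset[OF injg setM xS] by simp
    also have "\<dots> = (\<Prod>c\<in>h ` B. pmf (p c) (x c))"
      using B by (subst pmf_Pi) (auto simp: x_def)
    also have "\<dots> = (\<Prod>b\<in>B. pmf (p (h b)) (y b))"
      using inj by (subst prod.reindex) (auto simp: x_def)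
    also have "\<dots> = pmf (Pi_pmf B d (\<lambda>b. p (h b))) y"
      using B True by (simp add: pmf_Pi)
    finally show ?thesis .
  next
    case False
    hence "y \<notin> ?g ` set_pmf ?M" by auto
    moreover have "pmf (Pi_pmf B d (\<lambda>b. p (h b))) y = 0"
      using False B by (intro pmf_Pi_outside) auto
    ultimately show ?thesis by (simp add: pmf_map_outside)
  qed
qed

lemma Pi_pmf_reindex:
  assumes C: "finite C" and B: "finite B" and inj: "inj_on h B" and sub: "h ` B \<subseteq> C"
  shows "map_pmf (\<lambda>f b. if b \<in> B then f (h b) else d) (Pi_pmf C d p) = Pi_pmf B d (\<lambda>b. p (h b))"
proof -
  let ?g = "\<lambda>f b. if b \<in> B then f (h b) else d"
  have "Pi_pmf (h ` B) d p = map_pmf (\<lambda>f c. if c \<in> h ` B then f c else d) (Pi_pmf C d p)"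
    using C sub by (rule Pi_pmf_subset)
  hence "map_pmf ?g (Pi_pmf (h ` B) d p) =
           map_pmf (?g \<circ> (\<lambda>f c. if c \<in> h ` B then f c else d)) (Pi_pmf C d p)"
    by (simp add: pmf.map_comp)
  also have "?g \<circ> (\<lambda>f c. if c \<in> h ` B then f c else d) = ?g"
    by (auto simp: fun_eq_iff)
  finally have "map_pmf ?g (Pi_pmf C d p) = map_pmf ?g (Pi_pmf (h ` B) d p)" ..
  also have "\<dots> = Pi_pmf B d (\<lambda>b. p (h b))"
    by (rule Pi_pmf_reindex_image[OF B inj])
  finally show ?thesis .
qed

lemma inj_on_curry_dflt:
  "inj_on (\<lambda>f a. if a \<in> A then (\<lambda>b. if b \<in> B then f (a, b) else d) else (\<lambda>_. d))
          {f. \<forall>x. x \<notin> A \<times> B \<longrightarrow> f x = d}"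
proof (rule inj_onI, rule ext)
  fix f1 f2 :: "'a \<times> 'b \<Rightarrow> 'c" and x
  assume f: "f1 \<in> {f. \<forall>x. x \<notin> A \<times> B \<longrightarrow> f x = d}" "f2 \<in> {f. \<forall>x. x \<notin> A \<times> B \<longrightarrow> f x = d}"
    and eq: "(\<lambda>a. if a \<in> A then (\<lambda>b. if b \<in> B then f1 (a, b) else d) else (\<lambda>_. d)) =
             (\<lambda>a. if a \<in> A then (\<lambda>b. if b \<in> B then f2 (a, b) else d) else (\<lambda>_. d))"
  show "f1 x = f2 x"
  proof (cases "x \<in> A \<times> B")
    case True
    then obtain a b where ab: "a \<in> A" "b \<in> B" "x = (a, b)" by auto
    from eq have "(if a \<in> A then (\<lambda>b. if b \<in> B then f1 (a, b) else d) else (\<lambda>_. d)) b =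
                  (if a \<in> A then (\<lambda>b. if b \<in> B then f2 (a, b) else d) else (\<lambda>_. d)) b"
      by (rule fun_cong[OF fun_cong])
    with ab show ?thesis by simp
  next
    case False
    hence "f1 x = d" "f2 x = d" using f by blast+
    then show ?thesis by simp
  qed
qed

lemma Pi_pmf_curry:
  assumes A: "finite A" and B: "finite B"
  shows "map_pmf (\<lambda>f a. if a \<in> A then (\<lambda>b. if b \<in> B then f (a, b) else d) else (\<lambda>_. d))
           (Pi_pmf (A \<times> B) d p) = Pi_pmf A (\<lambda>_. d) (\<lambda>a. Pi_pmf B d (\<lambda>b. p (a, b)))"
    (is "map_pmf ?g ?M = ?P")
proof (rule pmf_eqI)
  let ?S = "{f. \<forall>x. x \<notin> A \<times> B \<longrightarrow> f x = d}"
  have setM: "set_pmf ?M \<subseteq> ?S" using A B by (intro set_Pi_pmf_subset) simp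
  have injg: "inj_on ?g ?S" by (rule inj_on_curry_dflt)
  fix y
  show "pmf (map_pmf ?g ?M) y = pmf ?P y"
  proof (cases "\<forall>a b. (a \<notin> A \<or> b \<notin> B) \<longrightarrow> y a b = d")
    case True
    define x where "x = (\<lambda>(a, b). y a b)"
    have xS: "x \<in> ?S" using True by (auto simp: x_def)
    have "?g x = y" using True by (auto simp: x_def fun_eq_iff)
    hence "pmf (map_pmf ?g ?M) y = pmf ?M x"
      using pmf_map_inj_on_superset[OF injg setM xS] by simp
    also have "\<dots> = (\<Prod>ab\<in>A \<times> B. pmf (p ab) (x ab))"
      using A B xS by (subst pmf_Pi) auto
    also have "\<dots> = (\<Prod>a\<in>A. \<Prod>b\<in>B. pmf (p (a, b)) (y a b))"
      unfolding prod.cartesian_product by (simp add: x_def case_prod_beta)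
    also have "\<dots> = (\<Prod>a\<in>A. pmf (Pi_pmf B d (\<lambda>b. p (a, b))) (y a))"
      using B True by (intro prod.cong refl, subst pmf_Pi') auto
    also have "\<dots> = pmf ?P y"
      using A True by (subst pmf_Pi') (auto simp: fun_eq_iff)
    finally show ?thesis .
  next
    case False
    then obtain a b where ab: "a \<notin> A \<or> b \<notin> B" "y a b \<noteq> d" by auto
    have "y \<notin> ?g ` set_pmf ?M"
      using ab by (cases "a \<in> A") auto
    hence "pmf (map_pmf ?g ?M) y = 0" by (simp add: pmf_map_outside)
    moreover have "pmf ?P y = 0"
    proof (cases "a \<in> A")
      case True
      hence "pmf (Pi_pmf B d (\<lambda>b. p (a, b))) (y a) = 0"
        using B ab by (intro pmf_Pi_outside) auto
      then show ?thesis using A True by (subst pmf_Pi) (auto intro: prod_zero)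
    next
      case False
      then show ?thesis using A ab by (intro pmf_Pi_outside) auto
    qed
    ultimately show ?thesis by simp
  qed
qed

lemma expectation_Pi_pmf_component:
  fixes g :: "'b \<Rightarrow> real"
  assumes "finite K" "k \<in> K"
  shows "measure_pmf.expectation (Pi_pmf K d (\<lambda>_. P)) (\<lambda>xs. g (xs k)) = measure_pmf.expectation P g"
proof -
  have "measure_pmf.expectation (Pi_pmf K d (\<lambda>_. P)) (\<lambda>xs. g (xs k)) =
        measure_pmf.expectation (map_pmf (\<lambda>xs. xs k) (Pi_pmf K d (\<lambda>_. P))) g" by simp
  also have "map_pmf (\<lambda>xs. xs k) (Pi_pmf K d (\<lambda>_. P)) = P"
    using assms by (simp add: Pi_pmf_component)
  finally show ?thesis .
qed

lemma expectation_Pi_pmf_pair: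
  fixes g :: "'b \<Rightarrow> real"
  assumes K: "finite K" and k: "k \<in> K" and l: "l \<in> K" "l \<noteq> k" and fin: "finite (set_pmf P)"
     and g0: "\<And>x. g x \<ge> 0"
  shows "measure_pmf.expectation (Pi_pmf K d (\<lambda>_. P)) (\<lambda>xs. g (xs k) * g (xs l)) =
         measure_pmf.expectation P g * measure_pmf.expectation P g"
proof -
  define f where "f j = (if j = k \<or> j = l then g else (\<lambda>_. 1))" for j
  have "g (xs k) * g (xs l) = (\<Prod>j\<in>K. f j (xs j))" for xs
  proof -
    have "(\<Prod>j\<in>K. f j (xs j)) = (\<Prod>j\<in>{k, l}. f j (xs j))"
      using K k l by (intro prod.mono_neutral_right) (auto simp: f_def)
    then show ?thesis using l by (simp add: f_def)
  qed
  moreover have "measure_pmf.expectation (Pi_pmf K d (\<lambda>_. P)) (\<lambda>xs. \<Prod>j\<in>K. f j (xs j)) =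
     (\<Prod>j\<in>K. measure_pmf.expectation P (f j))"
    using K fin g0 by (intro expectation_prod_Pi_pmf integrable_measure_pmf_finite) (auto simp: f_def)
  moreover have "(\<Prod>j\<in>K. measure_pmf.expectation P (f j)) = (\<Prod>j\<in>{k, l}. measure_pmf.expectation P (f j))"
    using K k l by (intro prod.mono_neutral_right) (auto simp: f_def)
  ultimately show ?thesis using l by (simp add: f_def)
qed

lemma covariance_Pi_pmf:
  fixes g :: "'b \<Rightarrow> real"
  assumes K: "finite K" and k: "k \<in> K" and l: "l \<in> K" and fin: "finite (set_pmf P)"
    and g0: "\<And>x. g x \<ge> 0"
  defines "\<mu> \<equiv> measure_pmf.expectation P g"
  shows "measure_pmf.expectation (Pi_pmf K d (\<lambda>_. P)) (\<lambda>xs. (g (xs k) - \<mu>) * (g (xs l) - \<mu>)) =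
      (if k = l then measure_pmf.expectation P (\<lambda>x. (g x)\<^sup>2) - \<mu>\<^sup>2 else 0)"
proof -
  let ?M = "Pi_pmf K d (\<lambda>_. P)"
  have int: "integrable (measure_pmf ?M) f" for f :: "_ \<Rightarrow> real"
    using K fin by (intro integrable_measure_pmf_finite finite_set_Pi_pmf) auto
  have mean: "measure_pmf.expectation ?M (\<lambda>xs. g (xs j)) = \<mu>" if "j \<in> K" for j
    using expectation_Pi_pmf_component[OF K that] by (simp add: \<mu>_def)
  have prod: "measure_pmf.expectation ?M (\<lambda>xs. g (xs k) * g (xs l)) =
       (if k = l then measure_pmf.expectation P (\<lambda>x. (g x)\<^sup>2) else \<mu> * \<mu>)"
    using expectation_Pi_pmf_component[OF K k, of d P "\<lambda>x. (g x)\<^sup>2"]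
          expectation_Pi_pmf_pair[OF K k l _ fin g0]
    by (cases "k = l") (simp_all add: power2_eq_square \<mu>_def)
  have "measure_pmf.expectation ?M (\<lambda>xs. (g (xs k) - \<mu>) * (g (xs l) - \<mu>)) =
        measure_pmf.expectation ?M (\<lambda>xs. g (xs k) * g (xs l) - \<mu> * g (xs l) - \<mu> * g (xs k) + \<mu> * \<mu>)"
    by (intro Bochner_Integration.integral_cong refl) (simp add: algebra_simps)
  also have "\<dots> = measure_pmf.expectation ?M (\<lambda>xs. g (xs k) * g (xs l)) - \<mu> * \<mu>"
    using k l by (simp add: int mean)
  finally show ?thesis by (simp add: prod power2_eq_square)
qed

lemma second_moment_weighted_sum:
  fixes g :: "'b \<Rightarrow> real" and a :: "'k \<Rightarrow> real"
  assumes K: "finite K" and fin: "finite (set_pmf P)" and g0: "\<And>x. g x \<ge> 0"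
  defines "\<mu> \<equiv> measure_pmf.expectation P g"
  shows "measure_pmf.expectation (Pi_pmf K d (\<lambda>_. P)) (\<lambda>xs. (\<Sum>k\<in>K. a k * (g (xs k) - \<mu>))\<^sup>2)
     \<le> (\<Sum>k\<in>K. (a k)\<^sup>2) * measure_pmf.expectation P (\<lambda>x. (g x)\<^sup>2)"
proof -
  let ?M = "Pi_pmf K d (\<lambda>_. P)"
  let ?E2 = "measure_pmf.expectation P (\<lambda>x. (g x)\<^sup>2)"
  have int: "integrable (measure_pmf ?M) f" for f :: "_ \<Rightarrow> real"
    using K fin by (intro integrable_measure_pmf_finite finite_set_Pi_pmf) auto
  have "measure_pmf.expectation ?M (\<lambda>xs. (\<Sum>k\<in>K. a k * (g (xs k) - \<mu>))\<^sup>2) =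
     measure_pmf.expectation ?M (\<lambda>xs. \<Sum>k\<in>K. \<Sum>l\<in>K. a k * a l * ((g (xs k) - \<mu>) * (g (xs l) - \<mu>)))"
    by (intro Bochner_Integration.integral_cong refl)
       (simp add: power2_eq_square sum_product algebra_simps)
  also have "\<dots> = (\<Sum>k\<in>K. \<Sum>l\<in>K. a k * a l *
      measure_pmf.expectation ?M (\<lambda>xs. (g (xs k) - \<mu>) * (g (xs l) - \<mu>)))"
    by (simp add: int integral_sum)
  also have "\<dots> = (\<Sum>k\<in>K. \<Sum>l\<in>K. a k * a l * (if k = l then ?E2 - \<mu>\<^sup>2 else 0))"
    using K fin g0 by (intro sum.cong refl) (simp add: covariance_Pi_pmf \<mu>_def)
  also have "\<dots> = (\<Sum>k\<in>K. (a k)\<^sup>2) * (?E2 - \<mu>\<^sup>2)"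
    using K by (simp add: power2_eq_square if_distrib sum.delta sum_distrib_right cong: if_cong)
  also have "\<dots> \<le> (\<Sum>k\<in>K. (a k)\<^sup>2) * ?E2"
    by (intro mult_left_mono) (auto intro: sum_nonneg)
  finally show ?thesis .
qed

lemma expectation_abs_le_sqrt:
  fixes X :: "'a \<Rightarrow> real"
  assumes fin: "finite (set_pmf M)"
  shows "measure_pmf.expectation M (\<lambda>x. \<bar>X x\<bar>) \<le> sqrt (measure_pmf.expectation M (\<lambda>x. (X x)\<^sup>2))"
proof -
  have int: "integrable (measure_pmf M) f" for f :: "'a \<Rightarrow> real"
    using fin by (rule integrable_measure_pmf_finite)
  define a where "a = measure_pmf.expectation M (\<lambda>x. \<bar>X x\<bar>)"
  have "0 \<le> measure_pmf.expectation M (\<lambda>x. (\<bar>X x\<bar> - a)\<^sup>2)" by simp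
  also have "\<dots> = measure_pmf.expectation M (\<lambda>x. (X x)\<^sup>2 - 2 * a * \<bar>X x\<bar> + a\<^sup>2)"
    by (intro Bochner_Integration.integral_cong refl) (simp add: power2_eq_square algebra_simps)
  also have "\<dots> = measure_pmf.expectation M (\<lambda>x. (X x)\<^sup>2) - a\<^sup>2"
    by (simp add: int a_def power2_eq_square)
  finally have "a\<^sup>2 \<le> measure_pmf.expectation M (\<lambda>x. (X x)\<^sup>2)" by simp
  moreover have "a \<ge> 0" unfolding a_def by simp
  ultimately show ?thesis unfolding a_def by (simp add: real_le_rsqrt)
qed

subsection \<open>Variational distance of a labelled mixture\<close>

lemma sum_abs_dev_from_mean_le:
  fixes a :: "'i \<Rightarrow> real"
  assumes S: "finite S" "S \<noteq> {}"
  shows "(\<Sum>i\<in>S. \<bar>a i - (\<Sum>j\<in>S. a j) / card S\<bar>) \<le> 2 * (\<Sum>i\<in>S. \<bar>a i - q\<bar>)"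
proof -
  have cS: "card S > 0" using S by (simp add: card_gt_0_iff)
  have "card S * \<bar>q - (\<Sum>j\<in>S. a j) / card S\<bar> = \<bar>\<Sum>j\<in>S. q - a j\<bar>"
    using cS by (simp add: sum_subtractf field_simps flip: abs_mult)
  also have "\<dots> \<le> (\<Sum>j\<in>S. \<bar>a j - q\<bar>)"
    by (rule order.trans[OF sum_abs]) (simp add: abs_minus_commute)
  finally have mean: "card S * \<bar>q - (\<Sum>j\<in>S. a j) / card S\<bar> \<le> (\<Sum>j\<in>S. \<bar>a j - q\<bar>)" .
  have "(\<Sum>i\<in>S. \<bar>a i - (\<Sum>j\<in>S. a j) / card S\<bar>) \<le>
        (\<Sum>i\<in>S. \<bar>a i - q\<bar> + \<bar>q - (\<Sum>j\<in>S. a j) / card S\<bar>)"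
    by (intro sum_mono) linarith
  also have "\<dots> = (\<Sum>i\<in>S. \<bar>a i - q\<bar>) + card S * \<bar>q - (\<Sum>j\<in>S. a j) / card S\<bar>"
    by (simp add: sum.distrib)
  finally show ?thesis using mean by linarith
qed

lemma var_dist_labelled_mixture:
  fixes q :: "nat \<Rightarrow> 'b pmf"
  assumes N: "N > 0" and B: "finite B" and supp: "\<And>m. m < N \<Longrightarrow> set_pmf (q m) \<subseteq> B"
  defines "P \<equiv> pmf_of_set {..<N} \<bind> (\<lambda>m. map_pmf (Pair m) (q m))"
  shows "var_dist P (product_of_marginals P) =
           (\<Sum>z\<in>B. \<Sum>m<N. \<bar>pmf (q m) z - (\<Sum>m'<N. pmf (q m') z) / N\<bar>) / N"
proof -
  define Q where "Q z = (\<Sum>m'<N. pmf (q m') z) / N" for z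
  have ne: "{..<N} \<noteq> {}" using N by auto
  have pmfP: "pmf P (m, z) = (if m < N then pmf (q m) z / N else 0)" for m z
  proof -
    have "pmf (map_pmf (Pair m') (q m')) (m, z) = (if m' = m then pmf (q m) z else 0)" for m'
      by (cases "m' = m") (simp add: pmf_map_inj' inj_on_def, subst pmf_map_outside, auto)
    then show ?thesis
      unfolding P_def pmf_bind using ne by (simp add: integral_pmf_of_set sum.delta')
  qed
  have "map_pmf fst P = pmf_of_set {..<N}"
    unfolding P_def map_bind_pmf by (simp add: pmf.map_comp o_def bind_return_pmf')
  moreover have "pmf (map_pmf snd P) z = Q z" for z
    unfolding P_def map_bind_pmf pmf_bind using ne
    by (simp add: pmf.map_comp o_def integral_pmf_of_set Q_def)
  ultimately have pmfPM: "pmf (product_of_marginals P) (m, z) = (if m < N then Q z / N else 0)" for m z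
    unfolding product_of_marginals_def pmf_pair using ne by (simp add: pmf_of_set)
  have outside: "pmf (q m) z = 0" "Q z = 0" if "m < N" "z \<notin> B" for m z
    using supp that by (auto simp: Q_def set_pmf_eq intro!: sum.neutral)
  have "var_dist P (product_of_marginals P) =
        (\<Sum>\<^sub>\<infinity>x\<in>{..<N} \<times> B. \<bar>pmf P x - pmf (product_of_marginals P) x\<bar>)"
    unfolding var_dist_def
  proof (intro infsum_cong_neutral)
    fix x assume "x \<in> UNIV - {..<N} \<times> B"
    then show "\<bar>pmf P x - pmf (product_of_marginals P) x\<bar> = 0"
      by (cases x) (auto simp: pmfP pmfPM outside)
  qed auto
  also have "\<dots> = (\<Sum>x\<in>{..<N} \<times> B. \<bar>pmf P x - pmf (product_of_marginals P) x\<bar>)"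
    using B by simp
  also have "\<dots> = (\<Sum>m<N. \<Sum>z\<in>B. \<bar>pmf (q m) z - Q z\<bar> / N)"
    unfolding sum.cartesian_product
    by (intro sum.cong refl) (auto simp: pmfP pmfPM diff_divide_distrib[symmetric])
  finally show ?thesis
    by (simp add: Q_def sum.swap[of _ B] flip: sum_divide_distrib)
qed

lemma var_dist_labelled_mixture_le:
  fixes q :: "nat \<Rightarrow> 'b pmf" and Q :: "'b \<Rightarrow> real"
  assumes N: "N > 0" and B: "finite B" and supp: "\<And>m. m < N \<Longrightarrow> set_pmf (q m) \<subseteq> B"
  defines "P \<equiv> pmf_of_set {..<N} \<bind> (\<lambda>m. map_pmf (Pair m) (q m))"
  shows "var_dist P (product_of_marginals P) \<le> (2 / N) * (\<Sum>m<N. \<Sum>z\<in>B. \<bar>pmf (q m) z - Q z\<bar>)"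
proof -
  have "(\<Sum>m<N. \<bar>pmf (q m) z - (\<Sum>m'<N. pmf (q m') z) / N\<bar>) \<le>
          2 * (\<Sum>m<N. \<bar>pmf (q m) z - Q z\<bar>)" for z
    using N sum_abs_dev_from_mean_le[of "{..<N}" "\<lambda>m. pmf (q m) z" "Q z"] by auto
  hence "(\<Sum>z\<in>B. \<Sum>m<N. \<bar>pmf (q m) z - (\<Sum>m'<N. pmf (q m') z) / N\<bar>) / N \<le>
          (\<Sum>z\<in>B. 2 * (\<Sum>m<N. \<bar>pmf (q m) z - Q z\<bar>)) / N"
    by (intro divide_right_mono sum_mono) auto
  also have "\<dots> = (2 / N) * (\<Sum>m<N. \<Sum>z\<in>B. \<bar>pmf (q m) z - Q z\<bar>)"
    by (subst sum.swap) (simp add: sum_distrib_left sum_divide_distrib)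
  finally show ?thesis
    using var_dist_labelled_mixture[OF N B supp] by (simp add: P_def)
qed

definition words :: "nat \<Rightarrow> (nat \<Rightarrow> 'z) set" where
  "words n = PiE {..<n} (\<lambda>_. UNIV)"

definition Wn :: "('x \<Rightarrow> ('y \<times> 'z) pmf) \<Rightarrow> nat \<Rightarrow> (nat \<Rightarrow> 'x) \<Rightarrow> (nat \<Rightarrow> 'z) \<Rightarrow> real" where
  "Wn W n x z = (\<Prod>t<n. pmf (chanZ W (x t)) (z t))"

text \<open>The channel \<open>V(z|u) = \<Sum>\<^sub>x p(x|u) W(z|x)\<close> from \<open>U\<close> to \<open>Z\<close> and its memoryless
  extension \<open>V\<^sup>n(z|u)\<close>: the ideal output law the code has to simulate.\<close>
definition chanZU :: "('u \<times> 'x) pmf \<Rightarrow> ('x \<Rightarrow> ('y \<times> 'z) pmf) \<Rightarrow> 'u \<Rightarrow> 'z pmf" where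
  "chanZU pUX W u = cond_X_U pUX u \<bind> chanZ W"

definition Vn :: "('u \<times> 'x) pmf \<Rightarrow> ('x \<Rightarrow> ('y \<times> 'z) pmf) \<Rightarrow> nat \<Rightarrow> (nat \<Rightarrow> 'u) \<Rightarrow> (nat \<Rightarrow> 'z) \<Rightarrow> real" where
  "Vn pUX W n u z = (\<Prod>t<n. pmf (chanZU pUX W (u t)) (z t))"

definition uword_pmf :: "('u \<times> 'x) pmf \<Rightarrow> nat \<Rightarrow> (nat \<Rightarrow> 'u) pmf" where
  "uword_pmf pUX n = Pi_pmf {..<n} undefined (\<lambda>_. marg_U pUX)"

definition xword_pmf :: "('u \<times> 'x) pmf \<Rightarrow> nat \<Rightarrow> (nat \<Rightarrow> 'u) \<Rightarrow> (nat \<Rightarrow> 'x) pmf" where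
  "xword_pmf pUX n u = Pi_pmf {..<n} undefined (\<lambda>t. cond_X_U pUX (u t))"

definition deviation ::
  "('u \<times> 'x) pmf \<Rightarrow> ('x \<Rightarrow> ('y \<times> 'z) pmf) \<Rightarrow> nat \<Rightarrow> nat \<Rightarrow> nat pmf \<Rightarrow> (nat \<Rightarrow> 'u)
     \<Rightarrow> (nat \<Rightarrow> nat \<Rightarrow> 'x) \<Rightarrow> real" where
  "deviation pUX W n Nr pK u xs =
     (\<Sum>z\<in>words n. \<bar>(\<Sum>k<Nr. pmf pK k * Wn W n (xs k) z) - Vn pUX W n u z\<bar>)"

definition expected_deviation ::
  "('u \<times> 'x) pmf \<Rightarrow> ('x \<Rightarrow> ('y \<times> 'z) pmf) \<Rightarrow> nat \<Rightarrow> nat \<Rightarrow> nat pmf \<Rightarrow> (nat \<Rightarrow> 'u) \<Rightarrow> real" where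
  "expected_deviation pUX W n Nr pK u =
     measure_pmf.expectation (Pi_pmf {..<Nr} (\<lambda>_. undefined) (\<lambda>_. xword_pmf pUX n u))
       (deviation pUX W n Nr pK u)"

lemma finite_words [simp]: "finite (words n :: (nat \<Rightarrow> 'z::finite) set)"
  unfolding words_def by (rule finite_PiE) auto

lemma set_Pi_pmf_words: "set_pmf (Pi_pmf {..<n} undefined p) \<subseteq> words n"
  using set_Pi_pmf_subset[of "{..<n}" undefined p] by (auto simp: words_def PiE_def extensional_def)

lemma pmf_Pi_pmf_chanZ:
  "z \<in> words n \<Longrightarrow> pmf (Pi_pmf {..<n} undefined (\<lambda>t. chanZ W (x t))) z = Wn W n x z"
  unfolding Wn_def by (subst pmf_Pi') (auto simp: words_def PiE_def extensional_def)

lemma Wn_nonneg: "Wn W n x z \<ge> 0"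
  unfolding Wn_def by (simp add: prod_nonneg)

lemma Vn_nonneg: "Vn pUX W n u z \<ge> 0"
  unfolding Vn_def by (simp add: prod_nonneg)

lemma finite_xword_pmf: "finite (set_pmf (xword_pmf (pUX :: ('u \<times> 'x::finite) pmf) n u))"
  unfolding xword_pmf_def by (intro finite_set_Pi_pmf) auto

lemma Vn_eq_expectation:
  fixes pUX :: "('u \<times> 'x::finite) pmf"
  shows "Vn pUX W n u z = measure_pmf.expectation (xword_pmf pUX n u) (\<lambda>x. Wn W n x z)"
proof -
  have "measure_pmf.expectation (xword_pmf pUX n u) (\<lambda>x. Wn W n x z) =
     (\<Prod>t<n. measure_pmf.expectation (cond_X_U pUX (u t)) (\<lambda>x'. pmf (chanZ W x') (z t)))"
    unfolding xword_pmf_def Wn_def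
    by (rule expectation_prod_Pi_pmf) (auto intro: integrable_measure_pmf_finite)
  also have "\<dots> = Vn pUX W n u z"
    unfolding Vn_def chanZU_def by (simp add: pmf_bind)
  finally show ?thesis by simp
qed

lemma sum_Vn:
  fixes W :: "'x \<Rightarrow> ('y \<times> 'z::finite) pmf"
  shows "(\<Sum>z\<in>words n. Vn pUX W n u z) = 1"
proof -
  have "(\<Sum>z\<in>words n. Vn pUX W n u z) = (\<Prod>t<n. \<Sum>y\<in>UNIV. pmf (chanZU pUX W (u t)) y)"
    unfolding words_def Vn_def by (subst prod_sum_PiE) auto
  also have "\<dots> = 1" by (simp add: sum_pmf_eq_1)
  finally show ?thesis .
qed

lemma deviation_cong:
  assumes "\<And>t. t < n \<Longrightarrow> u t = u' t" "\<And>k t. k < Nr \<Longrightarrow> t < n \<Longrightarrow> xs k t = xs' k t"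
  shows "deviation pUX W n Nr pK u xs = deviation pUX W n Nr pK u' xs'"
  unfolding deviation_def Wn_def Vn_def using assms
  by (intro sum.cong refl arg_cong[where f=abs] arg_cong2[where f="(-)"] prod.cong) auto

subsection \<open>Reduction of the leakage of one codebook to deviations\<close>

lemma idx_size_pos: "idx_size r n > 0"
  unfolding idx_size_def by auto

text \<open>The law of the eavesdropper's output \<open>Z\<^sup>n\<close> given the secret message \<open>M = m\<close>.\<close>
definition out_pmf ::
  "('x \<Rightarrow> ('y \<times> 'z) pmf) \<Rightarrow> real \<Rightarrow> nat \<Rightarrow> nat pmf \<Rightarrow> ('u, 'x) codebook \<Rightarrow> nat \<Rightarrow> (nat \<Rightarrow> 'z) pmf"
  where
  "out_pmf W R0 n pK cb m =
     pmf_of_set {..<idx_size R0 n} \<bind>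
       (\<lambda>m0. pK \<bind> (\<lambda>k. Pi_pmf {..<n} undefined (\<lambda>t. chanZ W (snd cb (m0, m, k, t)))))"

lemma joint_MZ_eq_mixture:
  "joint_MZ W R0 R n pK cb =
     pmf_of_set {..<idx_size R n} \<bind> (\<lambda>m. map_pmf (Pair m) (out_pmf W R0 n pK cb m))"
  unfolding joint_MZ_def out_pmf_def
  by (subst bind_commute_pmf) (simp add: map_bind_pmf map_pmf_def bind_assoc_pmf)

lemma pmf_out_pmf:
  assumes pK: "set_pmf pK \<subseteq> {..<Nr}" and z: "z \<in> words n"
  shows "pmf (out_pmf W R0 n pK cb m) z =
    (\<Sum>m0<idx_size R0 n. \<Sum>k<Nr. pmf pK k * Wn W n (\<lambda>t. snd cb (m0, m, k, t)) z) / idx_size R0 n"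
proof -
  have "measure_pmf.expectation pK
          (\<lambda>k. pmf (Pi_pmf {..<n} undefined (\<lambda>t. chanZ W (snd cb (m0, m, k, t)))) z) =
        (\<Sum>k<Nr. pmf pK k * Wn W n (\<lambda>t. snd cb (m0, m, k, t)) z)" for m0
    using pK z by (subst integral_measure_pmf_real[where A="{..<Nr}"])
                  (auto simp: pmf_Pi_pmf_chanZ mult.commute)
  then show ?thesis
    unfolding out_pmf_def pmf_bind using idx_size_pos[of R0 n]
    by (subst integral_pmf_of_set) auto
qed

lemma leakage_le_deviations:
  fixes W :: "'x \<Rightarrow> ('y \<times> 'z::finite) pmf"
  assumes pK: "set_pmf pK \<subseteq> {..<idx_size Rr n}"
  shows "var_dist (joint_MZ W R0 R n pK cb) (product_of_marginals (joint_MZ W R0 R n pK cb)) \<le>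
    (2 / idx_size R n) * (\<Sum>m<idx_size R n. (\<Sum>m0<idx_size R0 n.
      deviation pUX W n (idx_size Rr n) pK (\<lambda>t. fst cb (m0, t)) (\<lambda>k t. snd cb (m0, m, k, t)))
        / idx_size R0 n)"
proof -
  define N0 where "N0 = idx_size R0 n"
  define Q where "Q z = (\<Sum>m0<N0. Vn pUX W n (\<lambda>t. fst cb (m0, t)) z) / N0" for z
  define D where "D m0 m = deviation pUX W n (idx_size Rr n) pK (\<lambda>t. fst cb (m0, t))
                             (\<lambda>k t. snd cb (m0, m, k, t))" for m0 m
  have N0: "N0 > 0" unfolding N0_def by (rule idx_size_pos)
  have supp: "set_pmf (out_pmf W R0 n pK cb m) \<subseteq> words n" for m
    unfolding out_pmf_def using set_Pi_pmf_words by fastforce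
  have dev: "(\<Sum>z\<in>words n. \<bar>pmf (out_pmf W R0 n pK cb m) z - Q z\<bar>) \<le> (\<Sum>m0<N0. D m0 m) / N0" for m
  proof -
    have "(\<Sum>z\<in>words n. \<bar>pmf (out_pmf W R0 n pK cb m) z - Q z\<bar>) =
      (\<Sum>z\<in>words n. \<bar>\<Sum>m0<N0. (\<Sum>k<idx_size Rr n. pmf pK k * Wn W n (\<lambda>t. snd cb (m0, m, k, t)) z)
                              - Vn pUX W n (\<lambda>t. fst cb (m0, t)) z\<bar> / N0)"
      using N0 pK by (intro sum.cong refl)
        (simp add: pmf_out_pmf Q_def N0_def sum_subtractf diff_divide_distrib[symmetric])
    also have "\<dots> \<le> (\<Sum>z\<in>words n. (\<Sum>m0<N0. \<bar>(\<Sum>k<idx_size Rr n. pmf pK k *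
        Wn W n (\<lambda>t. snd cb (m0, m, k, t)) z) - Vn pUX W n (\<lambda>t. fst cb (m0, t)) z\<bar>) / N0)"
      by (intro sum_mono divide_right_mono sum_abs) auto
    also have "\<dots> = (\<Sum>m0<N0. D m0 m) / N0"
      unfolding D_def deviation_def by (simp add: sum_divide_distrib[symmetric] sum.swap[of _ "words n"])
    finally show ?thesis .
  qed
  have "var_dist (joint_MZ W R0 R n pK cb) (product_of_marginals (joint_MZ W R0 R n pK cb)) \<le>
      (2 / idx_size R n) * (\<Sum>m<idx_size R n. \<Sum>z\<in>words n. \<bar>pmf (out_pmf W R0 n pK cb m) z - Q z\<bar>)"
    unfolding joint_MZ_eq_mixture using supp
    by (intro var_dist_labelled_mixture_le idx_size_pos finite_words)
  also have "\<dots> \<le> (2 / idx_size R n) * (\<Sum>m<idx_size R n. (\<Sum>m0<N0. D m0 m) / N0)"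
    by (intro mult_left_mono sum_mono dev) auto
  finally show ?thesis by (simp add: D_def N0_def)
qed

lemma expected_deviation_cong:
  assumes "\<And>t. t < n \<Longrightarrow> u t = u' t"
  shows "expected_deviation pUX W n Nr pK u = expected_deviation pUX W n Nr pK u'"
proof -
  have "xword_pmf pUX n u = xword_pmf pUX n u'"
    unfolding xword_pmf_def using assms by (intro Pi_pmf_cong refl) auto
  then show ?thesis unfolding expected_deviation_def using assms
    by (intro Bochner_Integration.integral_cong refl deviation_cong) auto
qed

lemma codebook_U_row:
  fixes m0 N0 n :: nat
  assumes m0: "m0 < N0"
  shows "map_pmf (\<lambda>uc t. if t \<in> {..<n} then uc (m0, t) else undefined)
           (Pi_pmf ({..<N0} \<times> {..<n}) undefined (\<lambda>_. marg_U pUX)) = uword_pmf pUX n"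
  unfolding uword_pmf_def using m0
  by (subst Pi_pmf_reindex[where h="\<lambda>t. (m0, t)"]) (auto simp: inj_on_def intro!: finite_cartesian_product)

lemma codebook_X_block:
  fixes m0 m N0 N Nr n :: nat
  assumes m0: "m0 < N0" and m: "m < N"
  shows "map_pmf (\<lambda>xc k. if k \<in> {..<Nr} then (\<lambda>t. if t \<in> {..<n} then xc (m0, m, k, t) else undefined)
                          else (\<lambda>_. undefined))
           (Pi_pmf ({..<N0} \<times> {..<N} \<times> {..<Nr} \<times> {..<n}) undefined
              (\<lambda>(i, j, k, t). cond_X_U pUX (uc (i, t))))
         = Pi_pmf {..<Nr} (\<lambda>_. undefined) (\<lambda>_. xword_pmf pUX n (\<lambda>t. uc (m0, t)))"
proof -
  define h where "h = (\<lambda>(k::nat, t::nat). (m0, m, k, t))"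
  define XC where "XC = Pi_pmf ({..<N0} \<times> {..<N} \<times> {..<Nr} \<times> {..<n}) undefined
                           (\<lambda>(i, j, k, t). cond_X_U pUX (uc (i, t)))"
  let ?restrict = "\<lambda>f b. if b \<in> {..<Nr} \<times> {..<n} then f (h b) else undefined"
  let ?curry = "\<lambda>f k. if k \<in> {..<Nr} then (\<lambda>t. if t \<in> {..<n} then f (k, t) else undefined)
                      else (\<lambda>_. undefined)"
  have "map_pmf (\<lambda>xc k. if k \<in> {..<Nr} then (\<lambda>t. if t \<in> {..<n} then xc (m0, m, k, t)
                           else undefined) else (\<lambda>_. undefined)) XC =
         map_pmf (?curry \<circ> ?restrict) XC"
    by (intro map_pmf_cong refl) (auto simp: h_def fun_eq_iff)
  also have "\<dots> = map_pmf ?curry (map_pmf ?restrict XC)"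
    by (rule pmf.map_comp[symmetric])
  also have "map_pmf ?restrict XC =
             Pi_pmf ({..<Nr} \<times> {..<n}) undefined (\<lambda>b. cond_X_U pUX (uc (m0, snd b)))"
    unfolding XC_def using m0 m
    by (subst Pi_pmf_reindex) (auto simp: h_def inj_on_def case_prod_beta)
  also have "map_pmf ?curry \<dots> = Pi_pmf {..<Nr} (\<lambda>_. undefined) (\<lambda>_. xword_pmf pUX n (\<lambda>t. uc (m0, t)))"
    unfolding xword_pmf_def by (subst Pi_pmf_curry) auto
  finally show ?thesis unfolding XC_def .
qed

lemma codebook_expected_deviation:
  fixes pUX :: "('u::finite \<times> 'x::finite) pmf" and W :: "'x \<Rightarrow> ('y \<times> 'z::finite) pmf"
  assumes m0: "m0 < idx_size R0 n" and m: "m < idx_size R n"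
  shows "measure_pmf.expectation (codebook_pmf pUX R0 R Rr n)
     (\<lambda>cb. deviation pUX W n (idx_size Rr n) pK (\<lambda>t. fst cb (m0, t)) (\<lambda>k t. snd cb (m0, m, k, t)))
   = measure_pmf.expectation (uword_pmf pUX n) (expected_deviation pUX W n (idx_size Rr n) pK)"
proof -
  define Nr where "Nr = idx_size Rr n"
  define UC where "UC = Pi_pmf ({..<idx_size R0 n} \<times> {..<n}) undefined (\<lambda>_. marg_U pUX)"
  define XC where "XC uc = Pi_pmf ({..<idx_size R0 n} \<times> {..<idx_size R n} \<times> {..<Nr} \<times> {..<n})
                             undefined (\<lambda>(i, j, k, t). cond_X_U pUX (uc (i, t)))" for uc
  define D where "D = deviation pUX W n Nr pK"
  define row where "row uc = (\<lambda>t. uc (m0, t))" for uc :: "nat \<times> nat \<Rightarrow> 'u"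
  define blk where "blk xc = (\<lambda>k. if k \<in> {..<Nr} then (\<lambda>t. if t \<in> {..<n} then xc (m0, m, k, t)
                                   else undefined) else (\<lambda>_. undefined))" for xc :: "_ \<Rightarrow> 'x"
  have XC_blk: "map_pmf blk (XC uc) = Pi_pmf {..<Nr} (\<lambda>_. undefined) (\<lambda>_. xword_pmf pUX n (row uc))"
    for uc unfolding blk_def XC_def row_def using m0 m by (rule codebook_X_block)
  have "measure_pmf.expectation (codebook_pmf pUX R0 R Rr n)
          (\<lambda>cb. D (\<lambda>t. fst cb (m0, t)) (\<lambda>k t. snd cb (m0, m, k, t))) =
        measure_pmf.expectation UC
          (\<lambda>uc. measure_pmf.expectation (XC uc) (\<lambda>xc. D (row uc) (\<lambda>k t. xc (m0, m, k, t))))"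
    unfolding codebook_pmf_def UC_def XC_def Nr_def row_def
    by (subst expectation_bind_finite)
       (auto intro!: Bochner_Integration.integral_cong finite_set_Pi_pmf
             simp: expectation_bind_finite finite_set_Pi_pmf)
  also have "\<dots> = measure_pmf.expectation UC
          (\<lambda>uc. measure_pmf.expectation (XC uc) (\<lambda>xc. D (row uc) (blk xc)))"
    unfolding D_def
    by (intro Bochner_Integration.integral_cong refl deviation_cong) (auto simp: blk_def)
  also have "\<dots> = measure_pmf.expectation UC (\<lambda>uc. expected_deviation pUX W n Nr pK (row uc))"
    by (simp flip: XC_blk add: expected_deviation_def D_def)
  also have "\<dots> = measure_pmf.expectation UC (\<lambda>uc. expected_deviation pUX W n Nr pK
                      (\<lambda>t. if t \<in> {..<n} then uc (m0, t) else undefined))"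
    by (intro Bochner_Integration.integral_cong refl expected_deviation_cong) (simp add: row_def)
  also have "\<dots> = measure_pmf.expectation (uword_pmf pUX n) (expected_deviation pUX W n Nr pK)"
    unfolding UC_def by (simp flip: codebook_U_row[OF m0])
  finally show ?thesis by (simp add: D_def Nr_def)
qed

lemma finite_codebook_pmf:
  "finite (set_pmf (codebook_pmf (pUX :: ('u::finite \<times> 'x::finite) pmf) R0 R Rr n))"
  unfolding codebook_pmf_def by (simp, intro finite_UN_I finite_set_Pi_pmf) auto

lemma expected_leakage_le_expected_deviation:
  fixes pUX :: "('u::finite \<times> 'x::finite) pmf" and W :: "'x \<Rightarrow> ('y \<times> 'z::finite) pmf"
  assumes pK: "set_pmf pK \<subseteq> {..<idx_size Rr n}"
  shows "measure_pmf.expectation (codebook_pmf pUX R0 R Rr n)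
           (\<lambda>cb. var_dist (joint_MZ W R0 R n pK cb) (product_of_marginals (joint_MZ W R0 R n pK cb)))
     \<le> 2 * measure_pmf.expectation (uword_pmf pUX n) (expected_deviation pUX W n (idx_size Rr n) pK)"
proof -
  define N0 where "N0 = idx_size R0 n"
  define N where "N = idx_size R n"
  define E where "E = measure_pmf.expectation (uword_pmf pUX n) (expected_deviation pUX W n (idx_size Rr n) pK)"
  let ?M = "codebook_pmf pUX R0 R Rr n"
  have N: "N0 > 0" "N > 0" unfolding N0_def N_def by (rule idx_size_pos)+
  have int: "integrable (measure_pmf ?M) f" for f :: "_ \<Rightarrow> real"
    by (intro integrable_measure_pmf_finite finite_codebook_pmf)
  have "measure_pmf.expectation ?M
          (\<lambda>cb. var_dist (joint_MZ W R0 R n pK cb) (product_of_marginals (joint_MZ W R0 R n pK cb)))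
     \<le> measure_pmf.expectation ?M (\<lambda>cb. (2 / N) * (\<Sum>m<N. (\<Sum>m0<N0. deviation pUX W n
          (idx_size Rr n) pK (\<lambda>t. fst cb (m0, t)) (\<lambda>k t. snd cb (m0, m, k, t))) / N0))"
    by (intro integral_mono int) (use leakage_le_deviations[OF pK] in \<open>simp add: N_def N0_def\<close>)
  also have "\<dots> = (2 / N) * (\<Sum>m<N. (\<Sum>m0<N0. measure_pmf.expectation ?M (\<lambda>cb. deviation pUX W n
          (idx_size Rr n) pK (\<lambda>t. fst cb (m0, t)) (\<lambda>k t. snd cb (m0, m, k, t)))) / N0)"
    by (simp add: int integral_sum)
  also have "\<dots> = (2 / N) * (\<Sum>m<N. (\<Sum>m0<N0. E) / N0)"
    by (intro arg_cong[where f="\<lambda>x. _ * x"] sum.cong refl arg_cong[where f="\<lambda>x. x / _"])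
       (simp add: E_def codebook_expected_deviation N_def N0_def)
  also have "\<dots> = 2 * E" using N by simp
  finally show ?thesis unfolding E_def .
qed

subsection \<open>Second-moment bound on the deviation\<close>

lemma expectation_weighted_sum_Pi_pmf:
  fixes g :: "'b \<Rightarrow> real"
  assumes K: "finite K" and fin: "finite (set_pmf P)"
  shows "measure_pmf.expectation (Pi_pmf K d (\<lambda>_. P)) (\<lambda>xs. \<Sum>k\<in>K. a k * g (xs k)) =
           (\<Sum>k\<in>K. a k) * measure_pmf.expectation P g"
proof -
  have "integrable (measure_pmf (Pi_pmf K d (\<lambda>_. P))) f" for f :: "_ \<Rightarrow> real"
    using K fin by (intro integrable_measure_pmf_finite finite_set_Pi_pmf) auto
  then show ?thesis
    using K by (simp add: expectation_Pi_pmf_component sum_distrib_right)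
qed

lemma convex_combination_deviation_split:
  fixes a w1 w2 :: "'k \<Rightarrow> real"
  assumes a0: "\<And>k. k \<in> K \<Longrightarrow> a k \<ge> 0" and a1: "(\<Sum>k\<in>K. a k) = 1"
    and w2: "\<And>k. k \<in> K \<Longrightarrow> w2 k \<ge> 0" and \<mu>2: "\<mu>2 \<ge> 0"
  shows "\<bar>(\<Sum>k\<in>K. a k * (w1 k + w2 k)) - (\<mu>1 + \<mu>2)\<bar> \<le>
           \<bar>\<Sum>k\<in>K. a k * (w1 k - \<mu>1)\<bar> + (\<Sum>k\<in>K. a k * w2 k) + \<mu>2"
proof -
  have "(\<Sum>k\<in>K. \<mu>1 * a k) = \<mu>1" using a1 by (simp flip: sum_distrib_left)
  hence "(\<Sum>k\<in>K. a k * (w1 k + w2 k)) - (\<mu>1 + \<mu>2) =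
          (\<Sum>k\<in>K. a k * (w1 k - \<mu>1)) + (\<Sum>k\<in>K. a k * w2 k) - \<mu>2"
    using a1 by (simp add: algebra_simps sum.distrib sum_subtractf flip: sum_distrib_right)
  moreover have "(\<Sum>k\<in>K. a k * w2 k) \<ge> 0" using a0 w2 by (intro sum_nonneg) auto
  ultimately show ?thesis using \<mu>2 by linarith
qed

text \<open>Fluctuation of a weighted i.i.d. sum of variables bounded by \<open>b\<close> and dominated by \<open>h\<close>:
  by Cauchy--Schwarz it is controlled by the collision probability \<open>\<Sum>\<^sub>k a\<^sub>k\<^sup>2\<close> of the weights.\<close>
lemma weighted_fluctuation_le:
  fixes g h :: "'b \<Rightarrow> real" and a :: "'k \<Rightarrow> real"
  assumes K: "finite K" and fin: "finite (set_pmf P)"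
    and g0: "\<And>x. g x \<ge> 0" and gb: "\<And>x. g x \<le> b" and gh: "\<And>x. g x \<le> h x"
  shows "measure_pmf.expectation (Pi_pmf K d (\<lambda>_. P))
           (\<lambda>xs. \<bar>\<Sum>k\<in>K. a k * (g (xs k) - measure_pmf.expectation P g)\<bar>)
       \<le> sqrt ((\<Sum>k\<in>K. (a k)\<^sup>2) * (b * measure_pmf.expectation P h))"
proof -
  let ?M = "Pi_pmf K d (\<lambda>_. P)"
  have "measure_pmf.expectation ?M (\<lambda>xs. \<bar>\<Sum>k\<in>K. a k * (g (xs k) - measure_pmf.expectation P g)\<bar>)
      \<le> sqrt (measure_pmf.expectation ?M
               (\<lambda>xs. (\<Sum>k\<in>K. a k * (g (xs k) - measure_pmf.expectation P g))\<^sup>2))"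
    using K fin by (intro expectation_abs_le_sqrt finite_set_Pi_pmf) auto
  also have "\<dots> \<le> sqrt ((\<Sum>k\<in>K. (a k)\<^sup>2) * measure_pmf.expectation P (\<lambda>x. (g x)\<^sup>2))"
    using K fin g0 by (intro real_sqrt_le_mono second_moment_weighted_sum)
  also have "\<dots> \<le> sqrt ((\<Sum>k\<in>K. (a k)\<^sup>2) * (b * measure_pmf.expectation P h))"
  proof (intro real_sqrt_le_mono mult_left_mono)
    have "(g x)\<^sup>2 \<le> b * h x" for x
      using g0[of x] gb[of x] gh[of x] by (simp add: power2_eq_square mult_mono)
    hence "measure_pmf.expectation P (\<lambda>x. (g x)\<^sup>2) \<le> measure_pmf.expectation P (\<lambda>x. b * h x)"
      using fin by (intro integral_mono integrable_measure_pmf_finite)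
    then show "measure_pmf.expectation P (\<lambda>x. (g x)\<^sup>2) \<le> b * measure_pmf.expectation P h"
      by simp
  qed (auto intro: sum_nonneg)
  finally show ?thesis .
qed

definition tail_mass ::
  "('u \<times> 'x) pmf \<Rightarrow> ('x \<Rightarrow> ('y \<times> 'z) pmf) \<Rightarrow> nat \<Rightarrow> real \<Rightarrow> (nat \<Rightarrow> 'u) \<Rightarrow> real" where
  "tail_mass pUX W n T u = measure_pmf.expectation (xword_pmf pUX n u)
     (\<lambda>x. \<Sum>z\<in>words n. (if Wn W n x z > 2 powr T * Vn pUX W n u z then Wn W n x z else 0))"

text \<open>Soft-covering estimate: truncating \<open>W\<^sup>n\<close> at \<open>2 powr T * V\<^sup>n\<close>, the typical part contributes
  \<open>sqrt (2 powr T * \<Sum>\<^sub>k pK(k)\<^sup>2)\<close> and the atypical part at most twice its mass.\<close>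
lemma expected_deviation_le:
  fixes pUX :: "('u \<times> 'x::finite) pmf" and W :: "'x \<Rightarrow> ('y \<times> 'z::finite) pmf"
  assumes pK: "set_pmf pK \<subseteq> {..<Nr}"
  shows "expected_deviation pUX W n Nr pK u \<le>
           sqrt ((\<Sum>k<Nr. (pmf pK k)\<^sup>2) * 2 powr T) + 2 * tail_mass pUX W n T u"
proof -
  define P where "P = xword_pmf pUX n u"
  define M where "M = Pi_pmf {..<Nr} (\<lambda>_. undefined) (\<lambda>_. P)"
  define c where "c = (\<Sum>k<Nr. (pmf pK k)\<^sup>2)"
  define V where "V z = Vn pUX W n u z" for z
  define W1 where "W1 z x = (if Wn W n x z \<le> 2 powr T * V z then Wn W n x z else 0)" for z x
  define W2 where "W2 z x = (if Wn W n x z > 2 powr T * V z then Wn W n x z else 0)" for z x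
  define \<mu>1 where "\<mu>1 z = measure_pmf.expectation P (W1 z)" for z
  define \<mu>2 where "\<mu>2 z = measure_pmf.expectation P (W2 z)" for z
  have finP: "finite (set_pmf P)" unfolding P_def by (rule finite_xword_pmf)
  have intM: "integrable (measure_pmf M) f" for f :: "_ \<Rightarrow> real"
    unfolding M_def using finP by (intro integrable_measure_pmf_finite finite_set_Pi_pmf) auto
  have suma: "(\<Sum>k<Nr. pmf pK k) = 1" using pK by (intro sum_pmf_eq_1) auto
  have W2_0: "W2 z x \<ge> 0" for z x by (auto simp: W2_def Wn_nonneg)
  have Wsplit: "Wn W n x z = W1 z x + W2 z x" for z x by (auto simp: W1_def W2_def)
  have Vsplit: "V z = \<mu>1 z + \<mu>2 z" for z
    using finP unfolding V_def Vn_eq_expectation \<mu>1_def \<mu>2_def P_def[symmetric] Wsplit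
    by (simp add: integrable_measure_pmf_finite)
  have fluct: "measure_pmf.expectation M (\<lambda>xs. \<bar>\<Sum>k<Nr. pmf pK k * (W1 z (xs k) - \<mu>1 z)\<bar>)
                 \<le> sqrt (c * 2 powr T) * V z" for z
  proof -
    have "measure_pmf.expectation M (\<lambda>xs. \<bar>\<Sum>k<Nr. pmf pK k * (W1 z (xs k) - \<mu>1 z)\<bar>)
            \<le> sqrt (c * (2 powr T * V z * measure_pmf.expectation P (\<lambda>x. Wn W n x z)))"
      unfolding M_def \<mu>1_def c_def using finP
      by (intro weighted_fluctuation_le) (auto simp: W1_def Wn_nonneg V_def Vn_nonneg)
    also have "\<dots> = sqrt (c * 2 powr T) * V z"
      by (simp add: P_def V_def Vn_nonneg real_sqrt_mult flip: Vn_eq_expectation)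
    finally show ?thesis .
  qed
  have tail: "measure_pmf.expectation M (\<lambda>xs. \<Sum>k<Nr. pmf pK k * W2 z (xs k)) = \<mu>2 z" for z
    unfolding M_def \<mu>2_def using finP suma by (simp add: expectation_weighted_sum_Pi_pmf)
  have "expected_deviation pUX W n Nr pK u =
     measure_pmf.expectation M (\<lambda>xs. \<Sum>z\<in>words n. \<bar>(\<Sum>k<Nr. pmf pK k * Wn W n (xs k) z) - V z\<bar>)"
    unfolding expected_deviation_def deviation_def M_def P_def V_def ..
  also have "\<dots> \<le> measure_pmf.expectation M (\<lambda>xs. \<Sum>z\<in>words n.
      \<bar>\<Sum>k<Nr. pmf pK k * (W1 z (xs k) - \<mu>1 z)\<bar> + (\<Sum>k<Nr. pmf pK k * W2 z (xs k)) + \<mu>2 z)"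
    unfolding Wsplit Vsplit using suma W2_0 \<mu>2_def
    by (intro integral_mono intM sum_mono convex_combination_deviation_split) auto
  also have "\<dots> = (\<Sum>z\<in>words n. measure_pmf.expectation M (\<lambda>xs. \<bar>\<Sum>k<Nr. pmf pK k * (W1 z (xs k) - \<mu>1 z)\<bar>)
       + measure_pmf.expectation M (\<lambda>xs. \<Sum>k<Nr. pmf pK k * W2 z (xs k)) + \<mu>2 z)"
    by (simp add: intM integral_sum)
  also have "\<dots> \<le> (\<Sum>z\<in>words n. sqrt (c * 2 powr T) * V z + 2 * \<mu>2 z)"
    by (intro sum_mono) (use fluct tail in fastforce)
  also have "\<dots> = sqrt (c * 2 powr T) + 2 * (\<Sum>z\<in>words n. \<mu>2 z)"
    by (simp add: sum.distrib V_def sum_Vn flip: sum_distrib_left)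
  also have "(\<Sum>z\<in>words n. \<mu>2 z) = tail_mass pUX W n T u"
    unfolding tail_mass_def \<mu>2_def P_def W2_def V_def
    using finP by (simp add: P_def integrable_measure_pmf_finite integral_sum)
  finally show ?thesis by (simp add: c_def)
qed

subsection \<open>Chernoff bound on the tail mass\<close>

text \<open>The \<open>s\<close>-tilted likelihood \<open>W(z|x) (W(z|x)/V(z|u))\<^sup>s\<close>, its average given \<open>U = u\<close>, and its
  average \<open>\<Phi>(s)\<close> over the single-letter law; \<open>\<Phi>(s) = E[2 powr (s i(X;Z|U))]\<close> is the moment
  generating function of the conditional information density.\<close>
definition tilted :: "('u \<times> 'x) pmf \<Rightarrow> ('x \<Rightarrow> ('y \<times> 'z) pmf) \<Rightarrow> real \<Rightarrow> 'u \<Rightarrow> 'x \<Rightarrow> 'z \<Rightarrow> real"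
  where "tilted pUX W s u x z =
           pmf (chanZ W x) z * (pmf (chanZ W x) z / pmf (chanZU pUX W u) z) powr s"

definition tilted_given_U :: "('u \<times> 'x) pmf \<Rightarrow> ('x \<Rightarrow> ('y \<times> 'z::finite) pmf) \<Rightarrow> real \<Rightarrow> 'u \<Rightarrow> real"
  where "tilted_given_U pUX W s u =
           measure_pmf.expectation (cond_X_U pUX u) (\<lambda>x. \<Sum>z\<in>UNIV. tilted pUX W s u x z)"

definition Phi :: "('u \<times> 'x) pmf \<Rightarrow> ('x \<Rightarrow> ('y \<times> 'z::finite) pmf) \<Rightarrow> real \<Rightarrow> real"
  where "Phi pUX W s = measure_pmf.expectation (marg_U pUX) (tilted_given_U pUX W s)"

lemma tilted_given_U_nonneg: "tilted_given_U pUX W s u \<ge> 0"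
  unfolding tilted_given_U_def tilted_def
  by (intro Bochner_Integration.integral_nonneg sum_nonneg) auto

lemma Phi_nonneg: "Phi pUX W s \<ge> 0"
  unfolding Phi_def by (intro Bochner_Integration.integral_nonneg tilted_given_U_nonneg)

lemma Vn_pos:
  fixes pUX :: "('u \<times> 'x::finite) pmf"
  assumes "x \<in> set_pmf (xword_pmf pUX n u)" "Wn W n x z > 0"
  shows "Vn pUX W n u z > 0"
proof -
  have fin: "finite (set_pmf (xword_pmf pUX n u))" by (rule finite_xword_pmf)
  have "Vn pUX W n u z = (\<Sum>x'\<in>set_pmf (xword_pmf pUX n u). Wn W n x' z * pmf (xword_pmf pUX n u) x')"
    unfolding Vn_eq_expectation using fin by (intro integral_measure_pmf_real) auto
  also have "\<dots> \<ge> Wn W n x z * pmf (xword_pmf pUX n u) x"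
    using fin assms(1) by (intro member_le_sum) (auto simp: Wn_nonneg)
  finally show ?thesis using assms by (smt (verit) mult_pos_pos pmf_positive)
qed

lemma tail_le_tilted:
  fixes w v T s :: real
  assumes s: "s > 0" and w: "w \<ge> 0" and v: "w > 2 powr T * v \<Longrightarrow> v > 0"
  shows "(if w > 2 powr T * v then w else 0) \<le> 2 powr (- s * T) * (w * (w / v) powr s)"
proof (cases "w > 2 powr T * v")
  case True
  have vp: "v > 0" using v True .
  have "1 \<le> (w / v) / 2 powr T"
    using True vp by (simp add: field_simps)
  hence "1 \<le> ((w / v) / 2 powr T) powr s"
    using s by (intro ge_one_powr_ge_zero) auto
  also have "((w / v) / 2 powr T) powr s = 2 powr (- s * T) * (w / v) powr s"
    by (simp add: powr_divide powr_powr powr_minus powr_mult field_simps mult.commute)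
  finally have "w * 1 \<le> w * (2 powr (- s * T) * (w / v) powr s)"
    using w by (intro mult_left_mono) auto
  then show ?thesis using True by (simp add: algebra_simps)
qed (use w in simp)

lemma sum_tilted_Wn:
  fixes W :: "'x \<Rightarrow> ('y \<times> 'z::finite) pmf"
  shows "(\<Sum>z\<in>words n. Wn W n x z * (Wn W n x z / Vn pUX W n u z) powr s) =
           (\<Prod>t<n. \<Sum>z\<in>UNIV. tilted pUX W s (u t) (x t) z)"
proof -
  have "(\<Sum>z\<in>words n. Wn W n x z * (Wn W n x z / Vn pUX W n u z) powr s) =
          (\<Sum>z\<in>words n. \<Prod>t<n. tilted pUX W s (u t) (x t) (z t))"
    unfolding Wn_def Vn_def tilted_def
    by (intro sum.cong refl) (simp add: prod_dividef[symmetric] prod_powr_distrib prod.distrib)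
  also have "\<dots> = (\<Prod>t<n. \<Sum>z\<in>UNIV. tilted pUX W s (u t) (x t) z)"
    unfolding words_def by (subst prod_sum_PiE) auto
  finally show ?thesis .
qed

lemma tail_mass_le:
  fixes pUX :: "('u \<times> 'x::finite) pmf" and W :: "'x \<Rightarrow> ('y \<times> 'z::finite) pmf"
  assumes s: "s > 0"
  shows "tail_mass pUX W n T u \<le> 2 powr (- s * T) * (\<Prod>t<n. tilted_given_U pUX W s (u t))"
proof -
  let ?P = "xword_pmf pUX n u"
  have intP: "integrable (measure_pmf ?P) f" for f :: "_ \<Rightarrow> real"
    by (intro integrable_measure_pmf_finite finite_xword_pmf)
  have "tail_mass pUX W n T u \<le> measure_pmf.expectation ?P
      (\<lambda>x. \<Sum>z\<in>words n. 2 powr (- s * T) * (Wn W n x z * (Wn W n x z / Vn pUX W n u z) powr s))"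
    unfolding tail_mass_def
  proof (intro integral_mono_AE intP AE_pmfI sum_mono tail_le_tilted s Wn_nonneg)
    fix x z assume x: "x \<in> set_pmf ?P" and "Wn W n x z > 2 powr T * Vn pUX W n u z"
    hence "Wn W n x z > 0" using Vn_nonneg[of pUX W n u z]
      by (smt (verit) mult_nonneg_nonneg powr_ge_zero)
    then show "Vn pUX W n u z > 0" by (rule Vn_pos[OF x])
  qed
  also have "\<dots> = 2 powr (- s * T) * measure_pmf.expectation ?P
                    (\<lambda>x. \<Prod>t<n. \<Sum>z\<in>UNIV. tilted pUX W s (u t) (x t) z)"
    by (simp add: sum_tilted_Wn flip: sum_distrib_left)
  also have "measure_pmf.expectation ?P (\<lambda>x. \<Prod>t<n. \<Sum>z\<in>UNIV. tilted pUX W s (u t) (x t) z) =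
               (\<Prod>t<n. tilted_given_U pUX W s (u t))"
    unfolding xword_pmf_def tilted_given_U_def tilted_def
    by (subst expectation_prod_Pi_pmf) (auto intro: integrable_measure_pmf_finite sum_nonneg)
  finally show ?thesis .
qed

lemma expectation_uword_tilted:
  fixes pUX :: "('u::finite \<times> 'x) pmf"
  shows "measure_pmf.expectation (uword_pmf pUX n) (\<lambda>u. \<Prod>t<n. tilted_given_U pUX W s (u t)) =
           Phi pUX W s ^ n"
  unfolding uword_pmf_def Phi_def
  by (subst expectation_prod_Pi_pmf) (auto intro: integrable_measure_pmf_finite tilted_given_U_nonneg)

subsection \<open>\<open>\<Phi>\<close> as the moment generating function of the information density\<close>

definition pU :: "('u \<times> 'x::finite) pmf \<Rightarrow> 'u \<Rightarrow> real" where
  "pU pUX u = (\<Sum>x\<in>UNIV. pmf pUX (u, x))"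

definition pUXZ :: "('u \<times> 'x) pmf \<Rightarrow> ('x \<Rightarrow> ('y \<times> 'z) pmf) \<Rightarrow> 'u \<times> 'x \<times> 'z \<Rightarrow> real" where
  "pUXZ pUX W = (\<lambda>(u, x, z). pmf pUX (u, x) * pmf (chanZ W x) z)"

definition info_density :: "('u \<times> 'x) pmf \<Rightarrow> ('x \<Rightarrow> ('y \<times> 'z) pmf) \<Rightarrow> 'u \<times> 'x \<times> 'z \<Rightarrow> real" where
  "info_density pUX W = (\<lambda>(u, x, z). log 2 (pmf (chanZ W x) z / pmf (chanZU pUX W u) z))"

lemma measure_fst_slice:
  fixes p :: "('u \<times> 'x::finite) pmf"
  shows "measure_pmf.prob p {q. fst q = u} = pU p u"
proof -
  have "{q. fst q = u} = Pair u ` UNIV" by auto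
  hence "measure_pmf.prob p {q. fst q = u} = measure_pmf.prob p (Pair u ` UNIV)" by (rule arg_cong)
  also have "\<dots> = sum (pmf p) (Pair u ` UNIV)"
    by (intro measure_measure_pmf_finite) simp
  also have "\<dots> = pU p u" unfolding pU_def by (subst sum.reindex) (auto simp: inj_on_def)
  finally show ?thesis .
qed

lemma pmf_marg_U:
  fixes pUX :: "('u \<times> 'x::finite) pmf"
  shows "pmf (marg_U pUX) u = pU pUX u"
  unfolding marg_U_def pmf_map by (subst measure_fst_slice[symmetric]) (simp add: vimage_def)

lemma pmf_cond_X_U:
  fixes pUX :: "('u \<times> 'x::finite) pmf"
  assumes pos: "pU pUX u > 0"
  shows "pmf (cond_X_U pUX u) x = pmf pUX (u, x) / pU pUX u"
proof -
  define S where "S = {q :: 'u \<times> 'x. fst q = u}"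
  have ne: "set_pmf pUX \<inter> S \<noteq> {}"
  proof
    assume "set_pmf pUX \<inter> S = {}"
    hence "pmf pUX (u, x') = 0" for x' by (auto simp: S_def set_pmf_eq)
    with pos show False by (simp add: pU_def)
  qed
  have "pmf (cond_X_U pUX u) x = pmf (map_pmf snd (cond_pmf pUX S)) (snd (u, x))"
    by (simp add: cond_X_U_def S_def)
  also have "\<dots> = pmf (cond_pmf pUX S) (u, x)"
  proof (rule pmf_map_inj_on_superset)
    show "inj_on snd S" by (auto simp: S_def inj_on_def)
    show "set_pmf (cond_pmf pUX S) \<subseteq> S" using ne by (simp add: set_cond_pmf)
  qed (simp add: S_def)
  also have "\<dots> = pmf pUX (u, x) / measure_pmf.prob pUX S"
    using ne by (simp add: pmf_cond S_def)
  finally show ?thesis unfolding S_def measure_fst_slice .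
qed

lemma pmf_chanZU:
  fixes pUX :: "('u \<times> 'x::finite) pmf"
  assumes pos: "pU pUX u > 0"
  shows "pmf (chanZU pUX W u) z = (\<Sum>x\<in>UNIV. pmf pUX (u, x) * pmf (chanZ W x) z) / pU pUX u"
proof -
  have "pmf (chanZU pUX W u) z = (\<Sum>x\<in>UNIV. pmf (chanZ W x) z * pmf (cond_X_U pUX u) x)"
    unfolding chanZU_def pmf_bind by (intro integral_measure_pmf_real) auto
  also have "\<dots> = (\<Sum>x\<in>UNIV. pmf pUX (u, x) * pmf (chanZ W x) z) / pU pUX u"
    using pos by (simp add: pmf_cond_X_U sum_divide_distrib mult.commute)
  finally show ?thesis .
qed

lemma chanZU_pos:
  fixes pUX :: "('u \<times> 'x::finite) pmf"
  assumes "pmf pUX (u, x) > 0" "pmf (chanZ W x) z > 0"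
  shows "pmf (chanZU pUX W u) z > 0"
proof -
  have "pU pUX u > 0"
    unfolding pU_def using assms(1) by (intro sum_pos2[where i=x]) auto
  moreover have "(\<Sum>x\<in>UNIV. pmf pUX (u, x) * pmf (chanZ W x) z) > 0"
    using assms by (intro sum_pos2[where i=x]) auto
  ultimately show ?thesis by (simp add: pmf_chanZU)
qed

lemma sum_UNIV_triple:
  fixes f :: "'u::finite \<times> 'x::finite \<times> 'z::finite \<Rightarrow> 'r::comm_monoid_add"
  shows "(\<Sum>i\<in>UNIV. f i) = (\<Sum>u\<in>UNIV. \<Sum>x\<in>UNIV. \<Sum>z\<in>UNIV. f (u, x, z))"
  by (simp add: sum.cartesian_product UNIV_Times_UNIV[symmetric] del: UNIV_Times_UNIV)

lemma pUXZ_nonneg: "pUXZ pUX W i \<ge> 0"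
  unfolding pUXZ_def by (auto split: prod.splits)

lemma sum_pUXZ:
  fixes pUX :: "('u::finite \<times> 'x::finite) pmf" and W :: "'x \<Rightarrow> ('y \<times> 'z::finite) pmf"
  shows "(\<Sum>i\<in>(UNIV :: ('u \<times> 'x \<times> 'z) set). pUXZ pUX W i) = 1"
proof -
  have "(\<Sum>i\<in>(UNIV :: ('u \<times> 'x \<times> 'z) set). pUXZ pUX W i) = (\<Sum>u\<in>UNIV. \<Sum>x\<in>UNIV. pmf pUX (u, x))"
    unfolding sum_UNIV_triple pUXZ_def by (simp add: sum_pmf_eq_1 flip: sum_distrib_left)
  also have "\<dots> = (\<Sum>i\<in>UNIV. pmf pUX i)"
    by (simp add: sum.cartesian_product UNIV_Times_UNIV[symmetric] del: UNIV_Times_UNIV)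
  also have "\<dots> = 1" by (simp add: sum_pmf_eq_1)
  finally show ?thesis .
qed

lemma tilted_eq_info_density:
  fixes pUX :: "('u \<times> 'x::finite) pmf"
  shows "pmf pUX (u, x) * tilted pUX W s u x z =
           pUXZ pUX W (u, x, z) * 2 powr (s * info_density pUX W (u, x, z))"
proof (cases "pmf pUX (u, x) > 0 \<and> pmf (chanZ W x) z > 0")
  case True
  moreover from True have "pmf (chanZU pUX W u) z > 0" by (intro chanZU_pos) auto
  ultimately have "pmf (chanZ W x) z / pmf (chanZU pUX W u) z > 0" by simp
  hence "2 powr (s * log 2 (pmf (chanZ W x) z / pmf (chanZU pUX W u) z)) =
           (pmf (chanZ W x) z / pmf (chanZU pUX W u) z) powr s"
    by (simp add: powr_powr[symmetric] mult.commute[of s])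
  then show ?thesis by (simp add: pUXZ_def info_density_def tilted_def)
next
  case False
  hence "pmf pUX (u, x) = 0 \<or> pmf (chanZ W x) z = 0" using pmf_nonneg by (metis less_eq_real_def)
  then show ?thesis by (auto simp: pUXZ_def tilted_def)
qed

lemma tilted_given_U_times_pU:
  fixes pUX :: "('u \<times> 'x::finite) pmf" and W :: "'x \<Rightarrow> ('y \<times> 'z::finite) pmf"
  shows "tilted_given_U pUX W s u * pU pUX u =
           (\<Sum>x\<in>UNIV. \<Sum>z\<in>UNIV. pUXZ pUX W (u, x, z) * 2 powr (s * info_density pUX W (u, x, z)))"
proof (cases "pU pUX u > 0")
  case True
  have "tilted_given_U pUX W s u = (\<Sum>x\<in>UNIV. (\<Sum>z\<in>UNIV. tilted pUX W s u x z) * pmf (cond_X_U pUX u) x)"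
    unfolding tilted_given_U_def by (intro integral_measure_pmf_real) auto
  also have "\<dots> = (\<Sum>x\<in>UNIV. \<Sum>z\<in>UNIV. pmf pUX (u, x) * tilted pUX W s u x z) / pU pUX u"
    using True by (simp add: pmf_cond_X_U sum_distrib_right sum_distrib_left mult_ac
                        flip: sum_divide_distrib)
  finally show ?thesis using True by (simp add: tilted_eq_info_density)
next
  case False
  hence "pU pUX u = 0" unfolding pU_def using sum_nonneg[of UNIV "\<lambda>x. pmf pUX (u, x)"] by simp
  moreover from this have "pmf pUX (u, x) = 0" for x
    using sum_nonneg_eq_0_iff[of UNIV "\<lambda>x. pmf pUX (u, x)"] unfolding pU_def by simp
  ultimately show ?thesis by (simp add: pUXZ_def)
qed

lemma Phi_eq_mgf:
  fixes pUX :: "('u::finite \<times> 'x::finite) pmf" and W :: "'x \<Rightarrow> ('y \<times> 'z::finite) pmf"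
  shows "Phi pUX W s =
           (\<Sum>i\<in>(UNIV :: ('u \<times> 'x \<times> 'z) set). pUXZ pUX W i * 2 powr (s * info_density pUX W i))"
proof -
  have "Phi pUX W s = (\<Sum>u\<in>UNIV. tilted_given_U pUX W s u * pU pUX u)"
    unfolding Phi_def by (subst integral_measure_pmf_real[where A=UNIV]) (auto simp: pmf_marg_U)
  then show ?thesis by (simp add: sum_UNIV_triple tilted_given_U_times_pU)
qed

lemma cond_mutual_info_eq:
  fixes pUX :: "('u::finite \<times> 'x::finite) pmf" and W :: "'x \<Rightarrow> ('y \<times> 'z::finite) pmf"
  shows "cond_mutual_info pUX W =
           (\<Sum>i\<in>(UNIV :: ('u \<times> 'x \<times> 'z) set). pUXZ pUX W i * info_density pUX W i)"
  unfolding cond_mutual_info_def Let_def sum_UNIV_triple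
proof (intro sum.cong refl)
  fix u x z
  let ?A = "pmf pUX (u, x) * pmf (chanZ W x) z"
  show "(if ?A = 0 then 0 else ?A * log 2 (?A * (\<Sum>x\<in>UNIV. pmf pUX (u, x)) /
          (pmf pUX (u, x) * (\<Sum>x\<in>UNIV. pmf pUX (u, x) * pmf (chanZ W x) z)))) =
        pUXZ pUX W (u, x, z) * info_density pUX W (u, x, z)"
  proof (cases "?A = 0")
    case False
    hence p: "pmf pUX (u, x) > 0" and w: "pmf (chanZ W x) z > 0"
      using pmf_nonneg by (auto simp: less_eq_real_def)
    have pU: "pU pUX u > 0"
      unfolding pU_def using p by (intro sum_pos2[where i=x]) auto
    have S: "(\<Sum>x\<in>UNIV. pmf pUX (u, x) * pmf (chanZ W x) z) > 0"
      using p w by (intro sum_pos2[where i=x]) auto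
    have "?A * (\<Sum>x\<in>UNIV. pmf pUX (u, x)) /
            (pmf pUX (u, x) * (\<Sum>x\<in>UNIV. pmf pUX (u, x) * pmf (chanZ W x) z))
        = pmf (chanZ W x) z / pmf (chanZU pUX W u) z"
      using p pU S by (simp add: pmf_chanZU pU_def field_simps)
    then show ?thesis using False by (simp add: pUXZ_def info_density_def)
  qed (simp add: pUXZ_def)
qed

lemma exp_le_quadratic:
  fixes y :: real
  assumes "\<bar>y\<bar> \<le> 1"
  shows "exp y \<le> 1 + y + y\<^sup>2"
proof (cases "y \<ge> 0")
  case True then show ?thesis using assms exp_bound[of y] by auto
next
  case False
  define z where "z = - y"
  have z: "z > 0" "z \<le> 1" using False assms by (auto simp: z_def)
  have e: "1 + z + z\<^sup>2 / 2 \<le> exp z" using z by (intro exp_lower_Taylor_quadratic) auto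
  have pos: "1 - z + z\<^sup>2 > 0" using z by (smt (verit) power2_eq_square mult_pos_pos)
  have id: "(1 + z + z\<^sup>2 / 2) * (1 - z + z\<^sup>2) = 1 + z\<^sup>2 / 2 + z ^ 3 / 2 + z ^ 4 / 2"
    by (simp add: field_simps power2_eq_square power3_eq_cube power4_eq_xxxx)
  have "1 \<le> (1 + z + z\<^sup>2 / 2) * (1 - z + z\<^sup>2)"
    unfolding id using z by (simp add: add_nonneg_nonneg)
  also have "\<dots> \<le> exp z * (1 - z + z\<^sup>2)" using e pos by (intro mult_right_mono) auto
  finally have "1 / exp z \<le> 1 - z + z\<^sup>2" by (simp add: field_simps)
  then show ?thesis by (simp add: z_def exp_minus field_simps)
qed

lemma two_powr_le_tangent:
  fixes s l L \<delta> :: real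
  assumes s: "s > 0" and lL: "\<bar>l\<bar> \<le> L" and sL: "s * L \<le> 1 / 2" and sL2: "s * L\<^sup>2 \<le> \<delta>"
  shows "2 powr (s * l) \<le> 1 + s * ln 2 * l + s * ln 2 * \<delta>"
proof -
  have ln2: "0 < ln (2::real)" "ln (2::real) \<le> 1" using ln_2_less_1 by auto
  define y where "y = s * l * ln 2"
  have "\<bar>y\<bar> \<le> s * L * ln 2" unfolding y_def using lL s ln2
    by (simp add: abs_mult mult_left_mono mult_right_mono)
  also have "\<dots> \<le> s * L" using ln2 s lL by (intro mult_left_le) auto
  also have "\<dots> \<le> 1" using sL by simp
  finally have y1: "\<bar>y\<bar> \<le> 1" .
  have "y\<^sup>2 = s\<^sup>2 * l\<^sup>2 * (ln 2)\<^sup>2" by (simp add: y_def power_mult_distrib)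
  also have "\<dots> \<le> s\<^sup>2 * L\<^sup>2 * ln 2"
  proof -
    have "l\<^sup>2 \<le> L\<^sup>2" using lL by (metis abs_ge_zero power2_abs power_mono)
    moreover have "(ln 2)\<^sup>2 \<le> ln (2::real)" using ln2 by (simp add: power2_eq_square mult_left_le)
    ultimately show ?thesis using ln2 by (intro mult_mono mult_left_mono) auto
  qed
  also have "\<dots> = s * ln 2 * (s * L\<^sup>2)" by (simp add: power2_eq_square)
  also have "\<dots> \<le> s * ln 2 * \<delta>" using sL2 s ln2 by (intro mult_left_mono) auto
  finally have y2: "y\<^sup>2 \<le> s * ln 2 * \<delta>" .
  have "2 powr (s * l) = exp y" by (simp add: powr_def y_def mult.commute)
  also have "\<dots> \<le> 1 + y + y\<^sup>2" by (rule exp_le_quadratic[OF y1])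
  finally show ?thesis using y2 by (simp add: y_def mult.commute mult.left_commute)
qed

lemma mgf_le_exp_mean:
  fixes a l :: "'i \<Rightarrow> real"
  assumes S: "finite S" and a0: "\<And>i. i \<in> S \<Longrightarrow> a i \<ge> 0" and a1: "(\<Sum>i\<in>S. a i) = 1"
    and d: "\<delta> > 0"
  shows "\<exists>s>0. s \<le> 1 \<and> (\<Sum>i\<in>S. a i * 2 powr (s * l i)) \<le> 2 powr (s * ((\<Sum>i\<in>S. a i * l i) + \<delta>))"
proof -
  define L where "L = (\<Sum>i\<in>S. \<bar>l i\<bar>) + 1"
  have L1: "L \<ge> 1" unfolding L_def by (simp add: sum_nonneg)
  have lL: "\<bar>l i\<bar> \<le> L" if "i \<in> S" for i
    unfolding L_def using member_le_sum[of i S "\<lambda>i. \<bar>l i\<bar>"] S that by auto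
  define s where "s = min (1 / (2 * L)) (\<delta> / L\<^sup>2)"
  have s0: "s > 0" using L1 d by (simp add: s_def)
  have s_le: "s \<le> 1 / (2 * L)" "s \<le> \<delta> / L\<^sup>2" by (auto simp: s_def)
  hence sL: "s * L \<le> 1 / 2" and sL2: "s * L\<^sup>2 \<le> \<delta>" using L1 by (simp_all add: field_simps)
  have "1 / (2 * L) \<le> 1" using L1 by simp
  hence s1: "s \<le> 1" using s_le by linarith
  define m where "m = (\<Sum>i\<in>S. a i * l i)"
  have "2 powr (s * l i) \<le> 1 + s * ln 2 * l i + s * ln 2 * \<delta>" if "i \<in> S" for i
    using s0 lL[OF that] sL sL2 by (rule two_powr_le_tangent)
  hence "(\<Sum>i\<in>S. a i * 2 powr (s * l i)) \<le> (\<Sum>i\<in>S. a i * (1 + s * ln 2 * l i + s * ln 2 * \<delta>))"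
    using a0 by (intro sum_mono mult_left_mono) auto
  also have "\<dots> = (\<Sum>i\<in>S. a i) + (s * ln 2) * m + (s * ln 2 * \<delta>) * (\<Sum>i\<in>S. a i)"
    by (simp add: m_def distrib_left sum.distrib sum_distrib_left sum_distrib_right mult_ac)
  also have "\<dots> = 1 + s * ln 2 * (m + \<delta>)"
    using a1 by (simp add: algebra_simps)
  also have "\<dots> \<le> exp (s * ln 2 * (m + \<delta>))" by (rule exp_ge_add_one_self)
  also have "\<dots> = 2 powr (s * (m + \<delta>))" by (simp add: powr_def mult_ac)
  finally show ?thesis using s0 s1 unfolding m_def by blast
qed

lemma Phi_le_mutual_info:
  fixes pUX :: "('u::finite \<times> 'x::finite) pmf" and W :: "'x \<Rightarrow> ('y \<times> 'z::finite) pmf"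
  assumes "\<delta> > 0"
  shows "\<exists>s>0. s \<le> 1 \<and> Phi pUX W s \<le> 2 powr (s * (cond_mutual_info pUX W + \<delta>))"
proof -
  have "finite (UNIV :: ('u \<times> 'x \<times> 'z) set)" by simp
  from mgf_le_exp_mean[OF this pUXZ_nonneg sum_pUXZ assms, where l = "info_density pUX W"]
  show ?thesis by (simp add: Phi_eq_mgf cond_mutual_info_eq)
qed

subsection \<open>The finite-length bound and its exponent\<close>

lemma collision_prob_eq_renyi2:
  fixes pK :: "nat pmf"
  assumes pK: "set_pmf pK \<subseteq> {..<Nr}"
  shows "(\<Sum>k<Nr. (pmf pK k)\<^sup>2) = 2 powr (- renyi2 pK)"
proof -
  have fin: "finite (set_pmf pK)" by (rule finite_subset[OF pK]) simp
  have eq: "(\<Sum>k<Nr. (pmf pK k)\<^sup>2) = (\<Sum>k\<in>set_pmf pK. (pmf pK k)\<^sup>2)"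
    using pK by (intro sum.mono_neutral_right) (auto simp: set_pmf_eq)
  obtain k0 where k0: "k0 \<in> set_pmf pK" using set_pmf_not_empty[of pK] by blast
  have pos: "(\<Sum>k\<in>set_pmf pK. (pmf pK k)\<^sup>2) > 0"
    using fin k0 by (intro sum_pos2[where i=k0]) (auto simp: set_pmf_iff)
  show ?thesis unfolding eq renyi2_def using pos by simp
qed

lemma expected_leakage_le:
  fixes pUX :: "('u::finite \<times> 'x::finite) pmf" and W :: "'x \<Rightarrow> ('y \<times> 'z::finite) pmf"
  assumes pK: "set_pmf pK \<subseteq> {..<idx_size Rr n}" and s: "s > 0"
  shows "measure_pmf.expectation (codebook_pmf pUX R0 R Rr n)
           (\<lambda>cb. var_dist (joint_MZ W R0 R n pK cb) (product_of_marginals (joint_MZ W R0 R n pK cb)))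
     \<le> 2 * (sqrt (2 powr (T - renyi2 pK)) + 2 * (2 powr (- s * T) * Phi pUX W s ^ n))"
proof -
  let ?U = "uword_pmf pUX n"
  have intU: "integrable (measure_pmf ?U) f" for f :: "_ \<Rightarrow> real"
    unfolding uword_pmf_def by (intro integrable_measure_pmf_finite finite_set_Pi_pmf) auto
  have "expected_deviation pUX W n (idx_size Rr n) pK u \<le>
          sqrt (2 powr (T - renyi2 pK)) + 2 * (2 powr (- s * T) * (\<Prod>t<n. tilted_given_U pUX W s (u t)))"
    for u
    using expected_deviation_le[OF pK, of pUX W n u T] tail_mass_le[OF s, of pUX W n T u]
    by (simp add: collision_prob_eq_renyi2[OF pK] powr_add[symmetric])
  hence "measure_pmf.expectation ?U (expected_deviation pUX W n (idx_size Rr n) pK) \<le>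
     measure_pmf.expectation ?U (\<lambda>u. sqrt (2 powr (T - renyi2 pK)) +
                                      2 * (2 powr (- s * T) * (\<Prod>t<n. tilted_given_U pUX W s (u t))))"
    by (intro integral_mono intU)
  also have "\<dots> = sqrt (2 powr (T - renyi2 pK)) + 2 * (2 powr (- s * T) * Phi pUX W s ^ n)"
    by (simp add: intU expectation_uword_tilted)
  finally show ?thesis using expected_leakage_le_expected_deviation[OF pK, of pUX R0 R W] by simp
qed

lemma leakage_exponent:
  fixes I \<delta> s H \<Phi> :: real
  assumes d: "\<delta> > 0" and s: "0 < s" "s \<le> 1" and \<Phi>: "0 \<le> \<Phi>" "\<Phi> \<le> 2 powr (s * (I + \<delta> / 2))"
    and H: "H \<ge> real n * (I + 2 * \<delta>)"
  shows "2 * (sqrt (2 powr (real n * (I + \<delta>) - H)) + 2 * (2 powr (- s * (real n * (I + \<delta>))) * \<Phi> ^ n))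
           \<le> 6 * 2 powr (- (s * \<delta> / 2) * real n)"
proof -
  have "2 powr (real n * (I + \<delta>) - H) \<le> 2 powr (- \<delta> * real n)"
    using H by (intro powr_mono) (auto simp: algebra_simps)
  also have "\<dots> = (2 powr (- \<delta> * real n / 2))\<^sup>2"
    by (simp add: power2_eq_square powr_add[symmetric])
  finally have "sqrt (2 powr (real n * (I + \<delta>) - H)) \<le> 2 powr (- \<delta> * real n / 2)"
    by (simp add: real_le_lsqrt real_sqrt_le_iff)
  also have "\<dots> \<le> 2 powr (- (s * \<delta> / 2) * real n)"
    using s d by (intro powr_mono) (auto simp: field_simps intro!: mult_left_le_one_le)
  finally have typical: "sqrt (2 powr (real n * (I + \<delta>) - H)) \<le> 2 powr (- (s * \<delta> / 2) * real n)" .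
  have "2 powr (- s * (real n * (I + \<delta>))) * \<Phi> ^ n \<le>
          2 powr (- s * (real n * (I + \<delta>))) * (2 powr (s * (I + \<delta> / 2))) ^ n"
    using \<Phi> by (intro mult_left_mono power_mono) auto
  also have "\<dots> = 2 powr (- (s * \<delta> / 2) * real n)"
    by (simp add: powr_realpow[symmetric] powr_powr powr_add[symmetric] algebra_simps
             flip: powr_power)
  finally show ?thesis using typical by simp
qed

lemma eventually_const_times_powr_le:
  fixes b c :: real
  assumes b: "b > 0"
  shows "eventually (\<lambda>n. c * 2 powr (- b * real n) \<le> 2 powr (- (b / 2) * real n)) sequentially"
proof -
  obtain M :: nat where M: "real M \<ge> 2 * \<bar>c\<bar> / (b * ln 2)" using real_arch_simple by blast
  show ?thesis
  proof (rule eventually_sequentiallyI[of M])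
    fix n assume n: "n \<ge> M"
    have "real n \<ge> 2 * \<bar>c\<bar> / (b * ln 2)" using M n by linarith
    hence "(b / 2) * real n * ln 2 \<ge> \<bar>c\<bar>" using b by (simp add: field_simps)
    hence "c \<le> 1 + (b / 2) * real n * ln 2" by linarith
    also have "\<dots> \<le> exp ((b / 2) * real n * ln 2)" by (rule exp_ge_add_one_self)
    also have "\<dots> = 2 powr ((b / 2) * real n)" by (simp add: powr_def mult.commute)
    finally have "c * 2 powr (- b * real n) \<le> 2 powr ((b / 2) * real n) * 2 powr (- b * real n)"
      by (intro mult_right_mono) auto
    also have "\<dots> = 2 powr (- (b / 2) * real n)" by (simp add: powr_add[symmetric])
    finally show "c * 2 powr (- b * real n) \<le> 2 powr (- (b / 2) * real n)" .
  qed
qed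

theorem lemma4:
  fixes pUX :: "('u::finite \<times> 'x::finite) pmf"
    and W :: "'x \<Rightarrow> ('y::finite \<times> 'z::finite) pmf"
    and R0 R Rr :: real
    and pK :: "nat \<Rightarrow> nat pmf"
  assumes "R0 > 0" and "R > 0" and "Rr > 0"
    and "\<And>n. set_pmf (pK n) \<subseteq> {..<idx_size Rr n}"
    and "liminf (\<lambda>n. ereal (renyi2 (pK n) / real n)) > ereal (cond_mutual_info pUX W)"
  shows "\<exists>\<beta>>0. eventually (\<lambda>n.
           measure_pmf.expectation (codebook_pmf pUX R0 R Rr n)
             (\<lambda>cb. var_dist (joint_MZ W R0 R n (pK n) cb)
                            (product_of_marginals (joint_MZ W R0 R n (pK n) cb)))
           \<le> 2 powr (- \<beta> * real n)) sequentially"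
proof -
  let ?leak = "\<lambda>n. measure_pmf.expectation (codebook_pmf pUX R0 R Rr n)
                 (\<lambda>cb. var_dist (joint_MZ W R0 R n (pK n) cb)
                                (product_of_marginals (joint_MZ W R0 R n (pK n) cb)))"
  define I where "I = cond_mutual_info pUX W"
  obtain r where "ereal I < ereal r" and r: "ereal r < liminf (\<lambda>n. ereal (renyi2 (pK n) / real n))"
    using ereal_dense2[OF assms(5)] unfolding I_def by blast
  define \<delta> where "\<delta> = (r - I) / 2"
  have \<delta>: "\<delta> > 0" using \<open>ereal I < ereal r\<close> by (simp add: \<delta>_def)
  obtain s where s: "0 < s" "s \<le> 1" and \<Phi>: "Phi pUX W s \<le> 2 powr (s * (I + \<delta> / 2))"
    using Phi_le_mutual_info[of "\<delta> / 2" pUX W] \<delta> unfolding I_def by auto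
  define b where "b = s * \<delta> / 2"
  have b: "b > 0" using s \<delta> by (simp add: b_def)
  have "eventually (\<lambda>n. ?leak n \<le> 6 * 2 powr (- b * real n)) sequentially"
    using less_LiminfD[OF r] eventually_ge_at_top[of 1]
  proof eventually_elim
    case (elim n)
    hence H: "renyi2 (pK n) \<ge> real n * (I + 2 * \<delta>)" by (simp add: \<delta>_def field_simps)
    have "?leak n \<le> 2 * (sqrt (2 powr (real n * (I + \<delta>) - renyi2 (pK n))) +
                          2 * (2 powr (- s * (real n * (I + \<delta>))) * Phi pUX W s ^ n))"
      by (rule expected_leakage_le[OF assms(4) s(1)])
    also have "\<dots> \<le> 6 * 2 powr (- b * real n)"
      unfolding b_def by (rule leakage_exponent[OF \<delta> s Phi_nonneg \<Phi> H])
    finally show ?case .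
  qed
  with eventually_const_times_powr_le[OF b, of 6]
  have "eventually (\<lambda>n. ?leak n \<le> 2 powr (- (b / 2) * real n)) sequentially"
    by eventually_elim linarith
  then show ?thesis using b by (intro exI[of _ "b / 2"]) auto
qed

end
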